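(* Consider the deep linear ResNet setting described in the context, and assume that for every $N\ge1$ and $n\in\{1,\dots,N\}$, $\sqrt{\ell^N(0)}<\frac{m}{4\sqrt{2Me^3}}$ and $\|\theta_n^N(0)\|\le\frac14$; that there exists $C_0>0$ with $\|\theta_{n+1}^N(0)-\theta_n^N(0)\|\le\frac{C_0}{N}$ for all $N,n$; and that $\|\theta_n^N(0)-\theta_{2n}^{2N}(0)\|=O(\frac1N)$ as $N\to\infty$, uniformly in $n\in\{1,\dots,N\}$. Then for all $t\in\mathbb{R}_+$, $\|\theta_n^N(t)-\theta_{2n}^{2N}(t)\|=O(\frac1N)$ as $N\to\infty$, uniformly in $n\in\{1,\dots,N\}$.
   Context: Let $d\ge1$, $\Sigma\in\mathbb{R}^{d\times d}$ symmetric positive definite with largest eigenvalue $M>0$ and smallest eigenvalue $m>0$, and $B\in\mathbb{R}^{d\times d}$. For $A\in\mathbb{R}^{d\times d}$ put $\|A\|_\Sigma^2=\mathrm{Tr}(A\Sigma A^\top)$. For each integer $N\ge1$ and parameters $\theta_1^N,\dots,\theta_N^N\in\mathbb{R}^{d\times d}$, let $\Pi^N=(I_d+\frac{\theta_N^N}{N})\cdots(I_d+\frac{\theta_1^N}{N})$ and $L(\theta_1^N,\dots,\theta_N^N)=\|\Pi^N-B\|_\Sigma^2$. The parameters evolve by the rescaled gradient flow $\frac{d\theta_n^N}{dt}(t)=-N\nabla_{\theta_n^N}L(\theta_1^N(t),\dots,\theta_N^N(t))$ for $t\ge0$, and $\ell^N(t)=L(\theta_1^N(t),\dots,\theta_N^N(t))$.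 $\|\cdot\|$ denotes the spectral (operator) norm of matrices. *)

theory Defs
  imports "HOL-Analysis.Analysis"
begin

type_synonym 'd mat = "real^'d^'d"

definition mtrace :: "'d::finite mat \<Rightarrow> real" where
  "mtrace A = (\<Sum>i\<in>UNIV. A $ i $ i)"

definition sigma_sq :: "'d::finite mat \<Rightarrow> 'd mat \<Rightarrow> real" where
  "sigma_sq S A = mtrace (A ** S ** transpose A)"

fun piprod :: "nat \<Rightarrow> (nat \<Rightarrow> 'd::finite mat) \<Rightarrow> nat \<Rightarrow> 'd mat" where
  "piprod N th 0 = mat 1"
| "piprod N th (Suc k) = (mat 1 + (1 / real N) *\<^sub>R th (Suc k)) ** piprod N th k"

definition Pi_prod :: "nat \<Rightarrow> (nat \<Rightarrow> 'd::finite mat) \<Rightarrow> 'd mat" where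
  "Pi_prod N th = piprod N th N"

definition loss :: "'d::finite mat \<Rightarrow> 'd mat \<Rightarrow> nat \<Rightarrow> (nat \<Rightarrow> 'd mat) \<Rightarrow> real" where
  "loss S B N th = sigma_sq S (Pi_prod N th - B)"

definition is_eigenvalue :: "'d::finite mat \<Rightarrow> real \<Rightarrow> bool" where
  "is_eigenvalue A lam \<longleftrightarrow> (\<exists>v. v \<noteq> 0 \<and> A *v v = lam *\<^sub>R v)"

definition spec_norm :: "'d::finite mat \<Rightarrow> real" where
  "spec_norm A = onorm (\<lambda>x. A *v x)"

end

theory Submission
  imports Defs
begin

text \<open>
  Under the rescaled flow, layer n moves with velocity -2 U_n^T (Pi - B) Sigma L_n^T, where
  U_n and L_n are the products of the layers above and below n. As long as all parameters
  have spectral norm at most 1/2, these products are uniformly bounded and uniformly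
  invertible. This gives a Polyak-Lojasiewicz inequality, so the loss decays exponentially
  and each parameter drifts by at most e^(3/2) sqrt(M l(0)) / m < 1/4 from its initial value;
  by continuous induction the bound 1/2 then holds for all time.

  In this regime the velocity is Lipschitz in the layer index, so the parameters stay
  O(1/N)-smooth in n, and two consecutive layers of the depth-2N network multiply to one
  layer of the depth-N network up to O(1/N^2). Hence the velocities of theta_n^N and
  theta_2n^2N differ by the mean gap plus O(1/N), and Gronwall's inequality for the sum of
  squared gaps carries the O(1/N) bound from time 0 to time t.
\<close>

section \<open>Spectral and Frobenius norms of matrices\<close>

lemma spec_norm_bound: "norm (A *v x) \<le> spec_norm A * norm x"
  unfolding spec_norm_def by (rule onorm) simp

lemma spec_norm_nonneg: "0 \<le> spec_norm A"
  unfolding spec_norm_def by (rule onorm_pos_le) simp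

lemma spec_norm_leI: "(\<And>x. norm (A *v x) \<le> c * norm x) \<Longrightarrow> spec_norm A \<le> c"
  unfolding spec_norm_def by (rule onorm_le)

lemma spec_norm_zero [simp]: "spec_norm (0::real^'n^'n) = 0"
  using spec_norm_leI[of "0::real^'n^'n" 0] spec_norm_nonneg[of "0::real^'n^'n"] by simp

lemma spec_norm_triangle: "spec_norm (A + B) \<le> spec_norm A + spec_norm B"
proof (rule spec_norm_leI)
  fix x
  have "norm ((A + B) *v x) \<le> norm (A *v x) + norm (B *v x)"
    by (simp add: matrix_vector_mult_add_rdistrib norm_triangle_ineq)
  also have "\<dots> \<le> spec_norm A * norm x + spec_norm B * norm x"
    by (intro add_mono spec_norm_bound)
  finally show "norm ((A + B) *v x) \<le> (spec_norm A + spec_norm B) * norm x"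
    by (simp add: algebra_simps)
qed

lemma spec_norm_uminus [simp]: "spec_norm (- A) = spec_norm A"
proof -
  have "(\<lambda>x. (- A) *v x) = (\<lambda>x. - (A *v x))"
    by (auto simp: matrix_vector_mult_def vec_eq_iff sum_negf)
  then show ?thesis unfolding spec_norm_def by (simp add: onorm_neg)
qed

lemma spec_norm_triangle_diff: "spec_norm (A - B) \<le> spec_norm A + spec_norm B"
  using spec_norm_triangle[of A "- B"] by simp

lemma spec_norm_scaleR: "spec_norm (c *\<^sub>R A) = \<bar>c\<bar> * spec_norm A"
proof -
  have "(\<lambda>x. (c *\<^sub>R A) *v x) = (\<lambda>x. c *\<^sub>R (A *v x))"
    by (auto simp: matrix_vector_mult_def vec_eq_iff sum_distrib_left algebra_simps)
  then show ?thesis unfolding spec_norm_def by (simp add: onorm_scaleR)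
qed

lemma spec_norm_mult: "spec_norm (A ** B) \<le> spec_norm A * spec_norm B"
proof (rule spec_norm_leI)
  fix x
  have "norm ((A ** B) *v x) \<le> spec_norm A * norm (B *v x)"
    by (simp add: matrix_vector_mul_assoc[symmetric] spec_norm_bound)
  also have "\<dots> \<le> spec_norm A * (spec_norm B * norm x)"
    by (intro mult_left_mono spec_norm_bound spec_norm_nonneg)
  finally show "norm ((A ** B) *v x) \<le> spec_norm A * spec_norm B * norm x" by simp
qed

lemma spec_norm_mult3: "spec_norm (A ** B ** C) \<le> spec_norm A * spec_norm B * spec_norm C"
  by (meson mult_right_mono order_trans spec_norm_mult spec_norm_nonneg)

lemma spec_norm_mat_1: "spec_norm (mat 1) \<le> 1"
  by (rule spec_norm_leI) simp

lemma spec_norm_transpose_le: "spec_norm (transpose A) \<le> spec_norm A"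
proof (rule spec_norm_leI)
  fix x
  let ?y = "transpose A *v x"
  have "(norm ?y)^2 = (A *v ?y) \<bullet> x"
    by (simp add: power2_norm_eq_inner dot_lmul_matrix[symmetric] inner_commute)
  also have "\<dots> \<le> norm (A *v ?y) * norm x" by (rule norm_cauchy_schwarz)
  also have "\<dots> \<le> spec_norm A * norm ?y * norm x"
    by (intro mult_right_mono spec_norm_bound) auto
  finally have "norm ?y * norm ?y \<le> (spec_norm A * norm x) * norm ?y"
    by (simp add: power2_eq_square algebra_simps)
  then show "norm ?y \<le> spec_norm A * norm x"
    by (cases "norm ?y = 0") (auto simp: spec_norm_nonneg)
qed

lemma spec_norm_transpose [simp]: "spec_norm (transpose A) = spec_norm A"
  by (metis antisym spec_norm_transpose_le transpose_transpose)

lemma norm_vec_sq: "(norm (x::real^'n))^2 = (\<Sum>i\<in>UNIV. (x $ i)^2)"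
  unfolding power2_norm_eq_inner inner_vec_def by (simp add: power2_eq_square)

lemma norm_matrix_sq_rows: "(norm (A::real^'n^'m))^2 = (\<Sum>i\<in>UNIV. (norm (A $ i))^2)"
  by (simp add: power2_norm_eq_inner inner_vec_def)

lemma norm_transpose_matrix: "norm (transpose (A::real^'n^'n)) = norm A"
proof -
  have "(norm (transpose A))^2 = (norm A)^2"
    unfolding norm_matrix_sq_rows norm_vec_sq transpose_def by (simp, rule sum.swap)
  then show ?thesis by (simp add: power2_eq_iff_nonneg)
qed

lemma norm_matrix_sq_columns: "(norm (A::real^'n^'n))^2 = (\<Sum>j\<in>UNIV. (norm (column j A))^2)"
  using norm_matrix_sq_rows[of "transpose A"] norm_transpose_matrix[of A]
  by (simp add: transpose_def column_def)

lemma spec_norm_le_norm: "spec_norm (A::real^'n^'n) \<le> norm A"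
proof (rule spec_norm_leI)
  fix x
  have "(norm (A *v x))^2 = (\<Sum>i\<in>UNIV. (A $ i \<bullet> x)^2)"
    by (simp add: norm_vec_sq matrix_vector_mul_component)
  also have "\<dots> \<le> (\<Sum>i\<in>UNIV. (norm (A $ i) * norm x)^2)"
    by (intro sum_mono) (metis Cauchy_Schwarz_ineq2 abs_ge_zero power2_abs power_mono)
  also have "\<dots> = (norm A * norm x)^2"
    by (simp add: norm_matrix_sq_rows power_mult_distrib sum_distrib_right)
  finally show "norm (A *v x) \<le> norm A * norm x"
    using power2_le_imp_le by fastforce
qed

lemma norm_le_sqrt_card_spec_norm: "norm (A::real^'n^'n) \<le> sqrt (real CARD('n)) * spec_norm A"
proof -
  have "(norm A)^2 \<le> (\<Sum>j\<in>(UNIV::'n set). (spec_norm A)^2)"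
    unfolding norm_matrix_sq_columns
    by (intro sum_mono power_mono) (auto simp: spec_norm_def norm_column_le_onorm)
  also have "\<dots> = (sqrt (real CARD('n)) * spec_norm A)^2"
    by (simp add: power_mult_distrib)
  finally show ?thesis
    by (rule power2_le_imp_le) (simp add: spec_norm_nonneg)
qed

lemma continuous_on_spec_norm: "continuous_on UNIV (spec_norm :: real^'n^'n \<Rightarrow> real)"
proof -
  have lip: "\<bar>spec_norm A - spec_norm B\<bar> \<le> norm (A - B)" for A B :: "real^'n^'n"
    using spec_norm_triangle[of B "A - B"] spec_norm_triangle[of A "B - A"]
      spec_norm_le_norm[of "A - B"] spec_norm_uminus[of "A - B"] by simp
  show ?thesis
    unfolding continuous_on_iff
  proof (intro ballI allI impI)
    fix A :: "real^'n^'n" and e :: real assume "e > 0"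
    then show "\<exists>d>0. \<forall>A'\<in>UNIV. dist A' A < d \<longrightarrow> dist (spec_norm A') (spec_norm A) < e"
      by (intro exI[of _ e]) (auto simp: dist_norm dist_real_def intro: le_less_trans[OF lip])
  qed
qed

definition bounded_below :: "real^'n^'m \<Rightarrow> real \<Rightarrow> bool" where
  "bounded_below A c \<longleftrightarrow> (\<forall>v. c * norm v \<le> norm (A *v v))"

lemma bounded_below_mono: "bounded_below A c \<Longrightarrow> c' \<le> c \<Longrightarrow> bounded_below A c'"
  unfolding bounded_below_def by (meson mult_right_mono norm_ge_zero order_trans)

lemma bounded_below_mult:
  assumes "bounded_below A a" "bounded_below B b" "0 \<le> a"
  shows "bounded_below (A ** B) (a * b)"
  unfolding bounded_below_def
proof
  fix v
  have "a * (b * norm v) \<le> a * norm (B *v v)"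
    using assms by (simp add: bounded_below_def mult_left_mono)
  also have "\<dots> \<le> norm (A *v (B *v v))" using assms(1) by (simp add: bounded_below_def)
  finally show "a * b * norm v \<le> norm ((A ** B) *v v)"
    by (simp add: matrix_vector_mul_assoc mult.assoc)
qed

lemma column_matrix_mul: "column j (A ** B) = A *v column j B"
  by (simp add: column_def matrix_matrix_mult_def matrix_vector_mult_def vec_eq_iff)

lemma norm_matrix_mul_ge:
  assumes "bounded_below (A::real^'n^'n) c" "0 \<le> c"
  shows "c * norm (B::real^'n^'n) \<le> norm (A ** B)"
proof -
  have "(c * norm B)^2 = (\<Sum>j\<in>UNIV. (c * norm (column j B))^2)"
    by (simp add: norm_matrix_sq_columns power_mult_distrib sum_distrib_left del: column_def)
  also have "\<dots> \<le> (norm (A ** B))^2"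
    unfolding norm_matrix_sq_columns column_matrix_mul
    using assms by (intro sum_mono power_mono) (auto simp: bounded_below_def)
  finally show ?thesis
    by (rule power2_le_imp_le) simp
qed

lemma matrix_add_rdistrib: "((A::real^'n^'n) + B) ** (C::real^'n^'n) = A ** C + B ** C"
  by (simp add: matrix_matrix_mult_def vec_eq_iff sum.distrib algebra_simps)

lemma matrix_diff_rdistrib: "((A::real^'n^'n) - B) ** (C::real^'n^'n) = A ** C - B ** C"
  by (simp add: matrix_matrix_mult_def vec_eq_iff sum_subtractf algebra_simps)

lemma matrix_diff_ldistrib: "(C::real^'n^'n) ** ((A::real^'n^'n) - B) = C ** A - C ** B"
  by (simp add: matrix_matrix_mult_def vec_eq_iff sum_subtractf algebra_simps)

lemma matrix_mul_scaleR_right: "(A::real^'n^'n) ** (k *\<^sub>R (B::real^'n^'n)) = k *\<^sub>R (A ** B)"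
  by (simp add: matrix_scalar_ac scalar_matrix_assoc)

lemma matrix_mul_scaleR_left: "(k *\<^sub>R (A::real^'n^'n)) ** (B::real^'n^'n) = k *\<^sub>R (A ** B)"
  by (simp add: scalar_matrix_assoc)

lemma transpose_diff: "transpose ((A::real^'n^'n) - B) = transpose A - transpose B"
  by (simp add: transpose_def vec_eq_iff)

lemma mat_matrix_vector_mult: "(mat c :: real^'n^'n) *v y = c *\<^sub>R y"
proof -
  have "(\<Sum>j\<in>UNIV. (if i = j then c else 0) * y $ j) = c * y $ i" for i
    by (simp add: if_distrib[of "\<lambda>z. z * _"] cong: if_cong)
  then show ?thesis by (simp add: mat_def matrix_vector_mult_def vec_eq_iff)
qed

lemma bounded_bilinear_matrix_mul: "bounded_bilinear (\<lambda>(A::real^'n^'n) (B::real^'n^'n). A ** B)"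
proof -
  have "bilinear (\<lambda>(A::real^'n^'n) (B::real^'n^'n). A ** B)"
    unfolding bilinear_def
    by (auto intro!: linearI simp: matrix_add_ldistrib matrix_add_rdistrib
        matrix_scalar_ac scalar_matrix_assoc)
  then show ?thesis by (simp add: bilinear_conv_bounded_bilinear)
qed

lemma bounded_linear_sandwich: "bounded_linear (\<lambda>X::real^'n^'n. c *\<^sub>R ((U::real^'n^'n) ** X ** (L::real^'n^'n)))"
proof -
  have "linear (\<lambda>X. c *\<^sub>R (U ** X ** L))"
    by (intro linearI) (simp_all add: matrix_add_ldistrib matrix_add_rdistrib
        matrix_mul_scaleR_right matrix_mul_scaleR_left scaleR_add_right)
  then show ?thesis by (simp add: linear_conv_bounded_linear)
qed

lemma bounded_linear_matrix_vector_mult_left: "bounded_linear (\<lambda>A::real^'n^'n. A *v x)"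
proof -
  have "linear (\<lambda>A::real^'n^'n. A *v x)"
    by (intro linearI) (simp_all add: matrix_vector_mult_def vec_eq_iff
        sum_distrib_left algebra_simps sum.distrib)
  then show ?thesis by (simp add: linear_conv_bounded_linear)
qed

lemma has_vector_derivative_matrix_vector_mult:
  fixes f :: "real \<Rightarrow> real^'n^'n"
  assumes "(f has_vector_derivative f') F"
  shows "((\<lambda>s. f s *v x) has_vector_derivative (f' *v x)) F"
proof -
  note bl = bounded_linear_matrix_vector_mult_left[of x]
  have "((\<lambda>s. f s *v x) has_derivative (\<lambda>h. (h *\<^sub>R f') *v x)) F"
    using bounded_linear.has_derivative[OF bl assms[unfolded has_vector_derivative_def]] .
  moreover have "(\<lambda>h. (h *\<^sub>R f') *v x) = (\<lambda>h. h *\<^sub>R (f' *v x))"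
    using linear_scale[OF bounded_linear.linear[OF bl]] by auto
  ultimately show ?thesis unfolding has_vector_derivative_def by simp
qed

lemma inner_matrix_entries: "(A::real^'n^'m) \<bullet> B = (\<Sum>i\<in>UNIV. \<Sum>j\<in>UNIV. A$i$j * B$i$j)"
  by (simp add: inner_vec_def)

lemma inner_matrix_mul_left: "((A::real^'n^'n) ** (B::real^'n^'n)) \<bullet> (C::real^'n^'n) = B \<bullet> (transpose A ** C)"
proof -
  have "(A ** B) \<bullet> C = (\<Sum>i\<in>UNIV. \<Sum>j\<in>UNIV. \<Sum>k\<in>UNIV. A$i$k * B$k$j * C$i$j)"
    unfolding inner_matrix_entries by (simp add: matrix_matrix_mult_def sum_distrib_right)
  also have "\<dots> = (\<Sum>i\<in>UNIV. \<Sum>k\<in>UNIV. \<Sum>j\<in>UNIV. A$i$k * B$k$j * C$i$j)"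
    by (rule sum.cong[OF refl], rule sum.swap)
  also have "\<dots> = (\<Sum>k\<in>UNIV. \<Sum>i\<in>UNIV. \<Sum>j\<in>UNIV. A$i$k * B$k$j * C$i$j)"
    by (rule sum.swap)
  also have "\<dots> = (\<Sum>k\<in>UNIV. \<Sum>j\<in>UNIV. \<Sum>i\<in>UNIV. A$i$k * B$k$j * C$i$j)"
    by (rule sum.cong[OF refl], rule sum.swap)
  also have "\<dots> = B \<bullet> (transpose A ** C)"
    by (simp add: inner_matrix_entries matrix_matrix_mult_def transpose_def sum_distrib_left mult_ac)
  finally show ?thesis .
qed

lemma inner_transpose_matrix: "transpose (A::real^'n^'n) \<bullet> transpose (B::real^'n^'n) = A \<bullet> B"
  unfolding inner_matrix_entries transpose_def by (simp, rule sum.swap)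

lemma inner_matrix_mul_right: "((A::real^'n^'n) ** (B::real^'n^'n)) \<bullet> (C::real^'n^'n) = A \<bullet> (C ** transpose B)"
proof -
  have "(A ** B) \<bullet> C = transpose (A ** B) \<bullet> transpose C"
    by (rule inner_transpose_matrix[symmetric])
  also have "\<dots> = (transpose B ** transpose A) \<bullet> transpose C"
    by (simp add: matrix_transpose_mul)
  also have "\<dots> = transpose A \<bullet> transpose (C ** transpose B)"
    by (simp add: inner_matrix_mul_left matrix_transpose_mul)
  finally show ?thesis by (simp add: inner_transpose_matrix)
qed

lemma row_matrix_mul: "((A::real^'n^'n) ** (B::real^'n^'n)) $ i = transpose B *v (A $ i)"
  by (simp add: matrix_matrix_mult_def matrix_vector_mult_def transpose_def vec_eq_iff mult.commute)

lemma inner_matrix_vector_mult: "x \<bullet> ((A::real^'n^'n) *v y) = (transpose A *v x) \<bullet> y"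
  by (simp add: dot_lmul_matrix[symmetric])

lemma sigma_sq_eq_inner: "sigma_sq S A = (A ** S) \<bullet> A"
  by (simp add: sigma_sq_def mtrace_def inner_matrix_entries matrix_matrix_mult_def transpose_def)

section \<open>Quadratic forms of symmetric matrices\<close>

lemma psd_quadratic_form_zero:
  fixes A :: "real^'n^'n"
  assumes sym: "transpose A = A" and psd: "\<And>y. 0 \<le> y \<bullet> (A *v y)" and z: "x \<bullet> (A *v x) = 0"
  shows "A *v x = 0"
proof -
  let ?y = "A *v x"
  define a where "a = ?y \<bullet> ?y"
  define c where "c = ?y \<bullet> (A *v ?y)"
  have c0: "0 \<le> c" unfolding c_def by (rule psd)
  have key: "0 \<le> 2 * t * a + t^2 * c" for t
  proof -
    have "0 \<le> (x + t *\<^sub>R ?y) \<bullet> (A *v (x + t *\<^sub>R ?y))" by (rule psd)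
    also have "\<dots> = x \<bullet> (A *v x) + t * (x \<bullet> (A *v ?y)) + t * (?y \<bullet> (A *v x)) + t^2 * c"
      by (simp add: c_def matrix_vector_right_distrib matrix_vector_mult_scaleR
          inner_add_left inner_add_right power2_eq_square algebra_simps)
    also have "x \<bullet> (A *v ?y) = ?y \<bullet> (A *v x)"
      by (metis inner_commute inner_matrix_vector_mult sym)
    finally show ?thesis using z by (simp add: a_def)
  qed
  have "a \<le> 0"
  proof (rule ccontr)
    assume "\<not> a \<le> 0"
    then have ap: "a > 0" by simp
    define e where "e = a / (c + 1)"
    have ep: "e > 0" using ap c0 by (simp add: e_def)
    have "0 \<le> 2 * (- e) * a + (- e)^2 * c" by (rule key)
    then have "2 * a \<le> e * c" using ep by (simp add: power2_eq_square algebra_simps)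
    moreover have "e * c \<le> a"
    proof -
      have "e * c = a * (c / (c+1))" by (simp add: e_def)
      also have "\<dots> \<le> a * 1" using ap c0 by (intro mult_left_mono) auto
      finally show ?thesis by simp
    qed
    ultimately show False using ap by linarith
  qed
  then show ?thesis unfolding a_def by (metis antisym inner_ge_zero inner_eq_zero_iff)
qed

lemma min_eigenvalue_exists:
  fixes S :: "real^'n^'n"
  assumes sym: "transpose S = S"
  shows "\<exists>mu. is_eigenvalue S mu \<and> (\<forall>y. mu * (norm y)^2 \<le> y \<bullet> (S *v y))"
proof -
  let ?q = "\<lambda>x::real^'n. x \<bullet> (S *v x)"
  have cont: "continuous_on (sphere 0 1) ?q"
    by (intro continuous_intros)
  obtain x0 where x0: "x0 \<in> sphere 0 1" and min: "\<And>y. y \<in> sphere 0 1 \<Longrightarrow> ?q x0 \<le> ?q y"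
    using continuous_attains_inf[OF compact_sphere _ cont] by fastforce
  define mu where "mu = ?q x0"
  have lb: "mu * (norm y)^2 \<le> ?q y" for y
  proof (cases "y = 0")
    case False
    then have np: "norm y > 0" by simp
    have "(y /\<^sub>R norm y) \<in> sphere 0 1" using np by simp
    then have "mu \<le> ?q (y /\<^sub>R norm y)" using min mu_def by blast
    also have "?q (y /\<^sub>R norm y) = ?q y / (norm y)^2"
      by (simp add: matrix_vector_mult_scaleR power2_eq_square divide_inverse_commute)
    finally show ?thesis using np by (simp add: field_simps)
  qed simp
  define A where "A = S - mat mu"
  have Ay: "A *v y = S *v y - mu *\<^sub>R y" for y
    by (simp add: A_def matrix_vector_mult_diff_rdistrib mat_matrix_vector_mult)
  have symA: "transpose A = A"
    using sym by (simp add: A_def transpose_diff)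
  have psd: "0 \<le> y \<bullet> (A *v y)" for y
    using lb[of y] by (simp add: Ay inner_diff_right power2_norm_eq_inner)
  have z: "x0 \<bullet> (A *v x0) = 0"
    using x0 by (simp add: Ay inner_diff_right mu_def power2_norm_eq_inner[symmetric])
  have "A *v x0 = 0" by (rule psd_quadratic_form_zero[OF symA psd z])
  then have "S *v x0 = mu *\<^sub>R x0" by (simp add: Ay)
  moreover have "x0 \<noteq> 0" using x0 by auto
  ultimately have "is_eigenvalue S mu" unfolding is_eigenvalue_def by blast
  then show ?thesis using lb by blast
qed

lemma quadratic_form_ge_min_eigenvalue:
  fixes S :: "real^'n^'n"
  assumes sym: "transpose S = S" and m_min: "\<forall>lam. is_eigenvalue S lam \<longrightarrow> m \<le> lam"
  shows "m * (norm x)^2 \<le> x \<bullet> (S *v x)"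
proof -
  obtain mu where "is_eigenvalue S mu" and lb: "\<And>y. mu * (norm y)^2 \<le> y \<bullet> (S *v y)"
    using min_eigenvalue_exists[OF sym] by blast
  then have "m * (norm x)^2 \<le> mu * (norm x)^2" using m_min by (intro mult_right_mono) auto
  then show ?thesis using lb[of x] by linarith
qed

lemma quadratic_form_le_max_eigenvalue:
  fixes S :: "real^'n^'n"
  assumes sym: "transpose S = S" and M_max: "\<forall>lam. is_eigenvalue S lam \<longrightarrow> lam \<le> M"
  shows "x \<bullet> (S *v x) \<le> M * (norm x)^2"
proof -
  have negS: "(- S) *v y = - (S *v y)" for y
    by (simp add: matrix_vector_mult_def vec_eq_iff sum_negf)
  have "transpose (- S) = - S" using sym by (simp add: transpose_def vec_eq_iff)
  then obtain mu where ev: "is_eigenvalue (- S) mu" and lb: "\<And>y. mu * (norm y)^2 \<le> y \<bullet> ((- S) *v y)"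
    using min_eigenvalue_exists by blast
  from ev obtain v where "v \<noteq> 0" "(- S) *v v = mu *\<^sub>R v" unfolding is_eigenvalue_def by blast
  then have "S *v v = (- mu) *\<^sub>R v" by (simp add: negS) (metis minus_minus)
  then have "is_eigenvalue S (- mu)" using \<open>v \<noteq> 0\<close> unfolding is_eigenvalue_def by blast
  then have "- mu * (norm x)^2 \<le> M * (norm x)^2" using M_max by (intro mult_right_mono) auto
  moreover have "x \<bullet> (S *v x) \<le> - mu * (norm x)^2" using lb[of x] by (simp add: negS)
  ultimately show ?thesis by linarith
qed

lemma norm_matrix_vector_mult_ge_min_eigenvalue:
  fixes S :: "real^'n^'n"
  assumes sym: "transpose S = S" and m_min: "\<forall>lam. is_eigenvalue S lam \<longrightarrow> m \<le> lam"
  shows "m * norm x \<le> norm (S *v x)"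
proof (cases "x = 0")
  case False
  have "m * (norm x)^2 \<le> x \<bullet> (S *v x)" by (rule quadratic_form_ge_min_eigenvalue[OF sym m_min])
  also have "\<dots> \<le> norm x * norm (S *v x)" by (rule norm_cauchy_schwarz)
  finally have "norm x * (m * norm x) \<le> norm x * norm (S *v x)"
    by (simp add: power2_eq_square mult_ac)
  then show ?thesis using False by simp
qed simp

lemma psd_cauchy_schwarz:
  fixes S :: "real^'n^'n"
  assumes sym: "transpose S = S" and psd: "\<And>y. 0 \<le> y \<bullet> (S *v y)"
  shows "(x \<bullet> (S *v y))^2 \<le> (x \<bullet> (S *v x)) * (y \<bullet> (S *v y))"
proof (cases "y \<bullet> (S *v y) = 0")
  case True
  have "S *v y = 0" by (rule psd_quadratic_form_zero[OF sym psd True])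
  then show ?thesis by (simp add: psd)
next
  case False
  let ?b = "y \<bullet> (S *v y)" and ?c = "x \<bullet> (S *v y)" and ?a = "x \<bullet> (S *v x)"
  have bp: "?b > 0" using False psd[of y] by linarith
  have "y \<bullet> (S *v x) = ?c"
    by (metis inner_commute inner_matrix_vector_mult sym)
  then have "0 \<le> (x + t *\<^sub>R y) \<bullet> (S *v (x + t *\<^sub>R y)) \<longleftrightarrow> 0 \<le> ?a + 2 * t * ?c + t^2 * ?b" for t
    by (simp add: matrix_vector_right_distrib matrix_vector_mult_scaleR
        inner_add_left inner_add_right power2_eq_square algebra_simps)
  then have "0 \<le> ?a + 2 * (- ?c / ?b) * ?c + (- ?c / ?b)^2 * ?b" using psd by blast
  also have "\<dots> = ?a - ?c^2 / ?b" using bp by (simp add: field_simps power2_eq_square)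
  finally show ?thesis using bp by (simp add: field_simps mult.commute)
qed

lemma max_eigenvalue_nonneg:
  fixes S :: "real^'n^'n"
  assumes sym: "transpose S = S" and M_max: "\<forall>lam. is_eigenvalue S lam \<longrightarrow> lam \<le> M"
    and psd: "\<And>y. 0 \<le> y \<bullet> (S *v y)"
  shows "0 \<le> M"
proof -
  obtain mu v where v: "v \<noteq> 0" "S *v v = mu *\<^sub>R v" "mu \<le> M"
    using min_eigenvalue_exists[OF sym] M_max unfolding is_eigenvalue_def by blast
  have "0 \<le> mu * (v \<bullet> v)" using psd[of v] v by simp
  moreover have "v \<bullet> v > 0" using v by simp
  ultimately have "0 \<le> mu" by (simp add: zero_le_mult_iff)
  then show ?thesis using v by simp
qed

lemma norm_matrix_vector_mult_sq_le_max_eigenvalue: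
  fixes S :: "real^'n^'n"
  assumes sym: "transpose S = S" and M_max: "\<forall>lam. is_eigenvalue S lam \<longrightarrow> lam \<le> M"
    and psd: "\<And>y. 0 \<le> y \<bullet> (S *v y)"
  shows "(norm (S *v x))^2 \<le> M * (x \<bullet> (S *v x))"
proof (cases "S *v x = 0")
  case True
  then show ?thesis using max_eigenvalue_nonneg[OF assms] psd[of x] by simp
next
  case False
  let ?y = "S *v x"
  have "x \<bullet> (S *v ?y) = ?y \<bullet> ?y" by (metis inner_matrix_vector_mult sym)
  then have "((norm ?y)^2)^2 = (x \<bullet> (S *v ?y))^2" by (simp add: power2_norm_eq_inner)
  also have "\<dots> \<le> (x \<bullet> (S *v x)) * (?y \<bullet> (S *v ?y))" by (rule psd_cauchy_schwarz[OF sym psd])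
  also have "\<dots> \<le> (x \<bullet> (S *v x)) * (M * (norm ?y)^2)"
    by (intro mult_left_mono quadratic_form_le_max_eigenvalue[OF sym M_max] psd)
  finally have "(norm ?y)^2 * (norm ?y)^2 \<le> (M * (x \<bullet> (S *v x))) * (norm ?y)^2"
    by (simp add: power2_eq_square mult_ac)
  moreover have "(norm ?y)^2 > 0" using False by simp
  ultimately show ?thesis using mult_right_le_imp_le by blast
qed

lemma sigma_sq_rows:
  fixes S E :: "real^'n^'n"
  assumes sym: "transpose S = S"
  shows "sigma_sq S E = (\<Sum>i\<in>UNIV. (S *v (E$i)) \<bullet> E$i)"
    and "(norm (E ** S))^2 = (\<Sum>i\<in>UNIV. (norm (S *v (E$i)))^2)"
  by (simp_all add: sigma_sq_eq_inner inner_vec_def row_matrix_mul sym norm_matrix_sq_rows)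

lemma sigma_sq_le_norm_mult_sq:
  fixes S E :: "real^'n^'n"
  assumes sym: "transpose S = S" and m_min: "\<forall>lam. is_eigenvalue S lam \<longrightarrow> m \<le> lam"
    and m_pos: "m > 0"
  shows "m * sigma_sq S E \<le> (norm (E ** S))^2"
proof -
  have "m * ((S *v (E$i)) \<bullet> E$i) \<le> (norm (S *v (E$i)))^2" for i
  proof -
    have "m * ((S *v (E$i)) \<bullet> E$i) \<le> norm (S *v (E$i)) * (m * norm (E$i))"
      using m_pos norm_cauchy_schwarz[of "S *v (E$i)" "E$i"] by (simp add: mult_left_mono mult_ac)
    also have "\<dots> \<le> norm (S *v (E$i)) * norm (S *v (E$i))"
      by (intro mult_left_mono norm_matrix_vector_mult_ge_min_eigenvalue[OF sym m_min]) auto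
    finally show ?thesis by (simp add: power2_eq_square)
  qed
  then show ?thesis
    unfolding sigma_sq_rows[OF sym] by (simp add: sum_distrib_left sum_mono)
qed

lemma norm_mult_sq_le_sigma_sq:
  fixes S E :: "real^'n^'n"
  assumes sym: "transpose S = S" and M_max: "\<forall>lam. is_eigenvalue S lam \<longrightarrow> lam \<le> M"
    and psd: "\<And>y. 0 \<le> y \<bullet> (S *v y)"
  shows "(norm (E ** S))^2 \<le> M * sigma_sq S E"
proof -
  have "(norm (S *v (E$i)))^2 \<le> M * ((S *v (E$i)) \<bullet> E$i)" for i
    using norm_matrix_vector_mult_sq_le_max_eigenvalue[OF sym M_max psd, of "E$i"]
    by (simp add: inner_commute)
  then show ?thesis
    unfolding sigma_sq_rows[OF sym] by (simp add: sum_distrib_left sum_mono)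
qed

lemma sigma_sq_nonneg:
  fixes S E :: "real^'n^'n"
  assumes sym: "transpose S = S" and psd: "\<And>y. 0 \<le> y \<bullet> (S *v y)"
  shows "0 \<le> sigma_sq S E"
  unfolding sigma_sq_rows[OF sym] by (intro sum_nonneg) (simp add: inner_commute psd)

section \<open>Products of layers\<close>

fun segment_prod :: "(nat \<Rightarrow> real^'n^'n) \<Rightarrow> nat \<Rightarrow> nat \<Rightarrow> real^'n^'n" where
  "segment_prod F a 0 = mat 1"
| "segment_prod F a (Suc k) = F (a + Suc k) ** segment_prod F a k"

definition layer :: "nat \<Rightarrow> (nat \<Rightarrow> real^'n^'n) \<Rightarrow> nat \<Rightarrow> real^'n^'n" where
  "layer N th j = mat 1 + (1 / real N) *\<^sub>R th j"

lemma piprod_eq_segment_prod: "piprod N th k = segment_prod (layer N th) 0 k"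
  by (induction k) (simp_all add: layer_def)

lemma segment_prod_add: "segment_prod F a (k + l) = segment_prod F (a + k) l ** segment_prod F a k"
  by (induction l) (simp_all add: matrix_mul_assoc add.assoc)

lemma segment_prod_cong:
  "(\<And>j. a < j \<Longrightarrow> j \<le> a + k \<Longrightarrow> F j = G j) \<Longrightarrow> segment_prod F a k = segment_prod G a k"
  by (induction k) auto

lemma segment_prod_pairs:
  "segment_prod F (2*a) (2*k) = segment_prod (\<lambda>j. F (2*j) ** F (2*j - 1)) a k"
proof (induction k)
  case (Suc k)
  have "segment_prod F (2*a) (2 * Suc k) =
      (F (2 * (a + Suc k)) ** F (2 * (a + Suc k) - 1)) ** segment_prod F (2*a) (2*k)"
    by (simp add: matrix_mul_assoc)
  then show ?case using Suc by simp
qed simp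

lemma spec_norm_segment_prod_le:
  assumes "\<And>j. a < j \<Longrightarrow> j \<le> a + k \<Longrightarrow> spec_norm (F j) \<le> c" "0 \<le> c"
  shows "spec_norm (segment_prod F a k) \<le> c ^ k"
  using assms(1)
proof (induction k)
  case (Suc k)
  have "spec_norm (segment_prod F a (Suc k)) \<le> spec_norm (F (a + Suc k)) * spec_norm (segment_prod F a k)"
    by (simp add: spec_norm_mult)
  also have "\<dots> \<le> c * c ^ k"
    using Suc by (intro mult_mono) (auto simp: spec_norm_nonneg assms(2))
  finally show ?case by simp
qed (simp add: spec_norm_mat_1)

lemma bounded_below_segment_prod:
  assumes "\<And>j. a < j \<Longrightarrow> j \<le> a + k \<Longrightarrow> bounded_below (F j) c" "0 \<le> c"
  shows "bounded_below (segment_prod F a k) (c ^ k)"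
  using assms(1)
proof (induction k)
  case (Suc k)
  then show ?case using bounded_below_mult[of "F (a + Suc k)" c "segment_prod F a k" "c^k"] assms(2)
    by simp
qed (simp add: bounded_below_def)

lemma bounded_below_transpose_segment_prod:
  assumes "\<And>j. a < j \<Longrightarrow> j \<le> a + k \<Longrightarrow> bounded_below (transpose (F j)) c" "0 \<le> c"
  shows "bounded_below (transpose (segment_prod F a k)) (c ^ k)"
  using assms(1)
proof (induction k)
  case (Suc k)
  have "bounded_below (transpose (segment_prod F a k) ** transpose (F (a + Suc k))) (c^k * c)"
    using Suc assms(2) by (intro bounded_below_mult) auto
  then show ?case by (simp add: matrix_transpose_mul mult.commute)
qed (simp add: bounded_below_def)

lemma spec_norm_segment_prod_diff:
  assumes "\<And>j. a < j \<Longrightarrow> j \<le> a + k \<Longrightarrow> spec_norm (F j) \<le> c \<and> spec_norm (G j) \<le> c" "1 \<le> c"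
  shows "spec_norm (segment_prod F a k - segment_prod G a k)
    \<le> c ^ k * (\<Sum>j\<in>{a<..a+k}. spec_norm (F j - G j))"
  using assms(1)
proof (induction k)
  case (Suc k)
  let ?F = "F (a + Suc k)" and ?G = "G (a + Suc k)"
  let ?s = "\<Sum>j\<in>{a<..a+k}. spec_norm (F j - G j)"
  have IH: "spec_norm (segment_prod F a k - segment_prod G a k) \<le> c ^ k * ?s" using Suc by auto
  have bG: "spec_norm (segment_prod G a k) \<le> c ^ k"
    using Suc.prems assms(2) by (intro spec_norm_segment_prod_le) (force, linarith)
  have bF: "spec_norm ?F \<le> c" using Suc.prems by auto
  have eq: "segment_prod F a (Suc k) - segment_prod G a (Suc k)
      = ?F ** (segment_prod F a k - segment_prod G a k) + (?F - ?G) ** segment_prod G a k"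
    by (simp add: matrix_diff_ldistrib matrix_diff_rdistrib)
  have "spec_norm (segment_prod F a (Suc k) - segment_prod G a (Suc k)) \<le>
      spec_norm ?F * spec_norm (segment_prod F a k - segment_prod G a k)
      + spec_norm (?F - ?G) * spec_norm (segment_prod G a k)"
    unfolding eq by (rule order_trans[OF spec_norm_triangle add_mono[OF spec_norm_mult spec_norm_mult]])
  also have "\<dots> \<le> c * (c ^ k * ?s) + spec_norm (?F - ?G) * c ^ k"
    using assms(2) by (intro add_mono mult_mono IH bF bG) (auto simp: spec_norm_nonneg)
  also have "\<dots> = c ^ Suc k * ?s + c ^ k * spec_norm (?F - ?G)" by (simp add: mult_ac)
  also have "\<dots> \<le> c ^ Suc k * ?s + c ^ Suc k * spec_norm (?F - ?G)"
    using assms(2) by (intro add_left_mono mult_right_mono) (auto simp: spec_norm_nonneg)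
  also have "\<dots> = c ^ Suc k * (\<Sum>j\<in>{a<..a + Suc k}. spec_norm (F j - G j))"
  proof -
    have "{a<..a + Suc k} = insert (a + Suc k) {a<..a+k}" by auto
    then show ?thesis by (simp add: distrib_left)
  qed
  finally show ?case .
qed simp

lemma spec_norm_layer_le: "spec_norm (layer N th j) \<le> 1 + spec_norm (th j) / real N"
  unfolding layer_def
  by (rule order_trans[OF spec_norm_triangle]) (simp add: spec_norm_scaleR spec_norm_mat_1)

lemma bounded_below_layer: "bounded_below (layer N th j) (1 - spec_norm (th j) / real N)"
  unfolding bounded_below_def layer_def
proof
  fix v
  have "norm v - norm (((1 / real N) *\<^sub>R th j) *v v) \<le> norm ((mat 1 + (1 / real N) *\<^sub>R th j) *v v)"
    by (metis matrix_vector_mul_lid matrix_vector_mult_add_rdistrib norm_diff_ineq norm_minus_commute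
        add_diff_cancel_left' diff_minus_eq_add norm_minus_cancel)
  moreover have "norm (((1 / real N) *\<^sub>R th j) *v v) \<le> spec_norm (th j) / real N * norm v"
    using spec_norm_bound[of "(1 / real N) *\<^sub>R th j" v] by (simp add: spec_norm_scaleR)
  ultimately show "(1 - spec_norm (th j) / real N) * norm v \<le> norm ((mat 1 + (1 / real N) *\<^sub>R th j) *v v)"
    by (simp add: algebra_simps)
qed

lemma bounded_below_transpose_layer:
  "bounded_below (transpose (layer N th j)) (1 - spec_norm (th j) / real N)"
proof -
  have "transpose (layer N th j) = layer N (\<lambda>j. transpose (th j)) j"
    by (simp add: layer_def transpose_def vec_eq_iff mat_def)
  then show ?thesis using bounded_below_layer[of N "\<lambda>j. transpose (th j)" j] by simp
qed

section \<open>The gradient flow of the loss\<close>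

text \<open>
  For \<open>1 \<le> n \<le> N\<close>, \<open>Pi^N = upper_prod N th n ** layer N th n ** lower_prod N th n\<close>:
  the upper product collects layers \<open>n+1, \<dots>, N\<close> and the lower one layers \<open>1, \<dots>, n-1\<close>.
\<close>

definition upper_prod :: "nat \<Rightarrow> (nat \<Rightarrow> real^'n^'n) \<Rightarrow> nat \<Rightarrow> real^'n^'n" where
  "upper_prod N th n = segment_prod (layer N th) n (N - n)"

definition lower_prod :: "nat \<Rightarrow> (nat \<Rightarrow> real^'n^'n) \<Rightarrow> nat \<Rightarrow> real^'n^'n" where
  "lower_prod N th n = segment_prod (layer N th) 0 (n - 1)"

definition weighted_residual :: "real^'n^'n \<Rightarrow> real^'n^'n \<Rightarrow> nat \<Rightarrow> (nat \<Rightarrow> real^'n^'n) \<Rightarrow> real^'n^'n" where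
  "weighted_residual S B N th = (piprod N th N - B) ** S"

text \<open>The right-hand side \<open>-N \<nabla>\<^sub>n L\<close> of the rescaled gradient flow.\<close>

definition velocity :: "real^'n^'n \<Rightarrow> real^'n^'n \<Rightarrow> nat \<Rightarrow> (nat \<Rightarrow> real^'n^'n) \<Rightarrow> nat \<Rightarrow> real^'n^'n" where
  "velocity S B N th n =
    (-2) *\<^sub>R (transpose (upper_prod N th n) ** weighted_residual S B N th ** transpose (lower_prod N th n))"

lemma piprod_split:
  assumes "1 \<le> n" "n \<le> N"
  shows "piprod N th N = upper_prod N th n ** layer N th n ** lower_prod N th n"
proof -
  have "piprod N th N = segment_prod (layer N th) 0 (n + (N - n))"
    using assms by (simp add: piprod_eq_segment_prod)
  also have "\<dots> = upper_prod N th n ** segment_prod (layer N th) 0 n"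
    by (simp add: segment_prod_add upper_prod_def)
  also have "segment_prod (layer N th) 0 n = layer N th n ** lower_prod N th n"
    using assms by (cases n) (auto simp: lower_prod_def)
  finally show ?thesis by (simp add: matrix_mul_assoc)
qed

lemma upper_prod_update: "n \<le> N \<Longrightarrow> upper_prod N (th(n := X)) n = upper_prod N th n"
  unfolding upper_prod_def by (rule segment_prod_cong) (auto simp: layer_def)

lemma lower_prod_update: "lower_prod N (th(n := X)) n = lower_prod N th n"
  unfolding lower_prod_def by (rule segment_prod_cong) (auto simp: layer_def)

lemma inner_sandwich_weighted_residual:
  "(upper_prod N th n ** X ** lower_prod N th n) \<bullet> weighted_residual S B N th
    = - (1/2) * (X \<bullet> velocity S B N th n)"
proof -
  let ?U = "upper_prod N th n" and ?L = "lower_prod N th n" and ?W = "weighted_residual S B N th"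
  have "(?U ** X ** ?L) \<bullet> ?W = X \<bullet> (transpose ?U ** ?W ** transpose ?L)"
    using inner_matrix_mul_right[of "?U ** X" ?L ?W] inner_matrix_mul_left[of ?U X "?W ** transpose ?L"]
    by (simp add: matrix_mul_assoc)
  then show ?thesis by (simp add: velocity_def)
qed

lemma loss_has_derivative:
  fixes S B :: "real^'n^'n"
  assumes sym: "transpose S = S" and n: "1 \<le> n" "n \<le> N"
  shows "((\<lambda>X. loss S B N (\<lambda>k. if k = n then X else th k)) has_derivative
     (\<lambda>H. (- (1 / real N) *\<^sub>R velocity S B N th n) \<bullet> H)) (at (th n))"
proof -
  let ?U = "upper_prod N th n" and ?L = "lower_prod N th n" and ?W = "weighted_residual S B N th"
  define E0 where "E0 = ?U ** ?L - B"
  define f where "f = (\<lambda>X::real^'n^'n. (1 / real N) *\<^sub>R (?U ** X ** ?L))"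
  have bl: "bounded_linear f" unfolding f_def by (rule bounded_linear_sandwich)
  have EX: "Pi_prod N (th(n := X)) - B = E0 + f X" for X
  proof -
    have "Pi_prod N (th(n := X)) = ?U ** (mat 1 + (1 / real N) *\<^sub>R X) ** ?L"
      unfolding Pi_prod_def using piprod_split[OF n, of "th(n := X)"] n
      by (simp add: upper_prod_update lower_prod_update layer_def)
    also have "\<dots> = ?U ** ?L + f X"
      by (simp add: f_def matrix_add_ldistrib matrix_add_rdistrib matrix_mul_scaleR_right
          matrix_mul_scaleR_left)
    finally show ?thesis by (simp add: E0_def)
  qed
  have loss_eq: "loss S B N (\<lambda>k. if k = n then X else th k) = ((E0 + f X) ** S) \<bullet> (E0 + f X)" for X
    using EX[of X] by (simp add: loss_def sigma_sq_eq_inner fun_upd_def)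
  have dE: "((\<lambda>X. E0 + f X) has_derivative f) (at (th n))"
    using bounded_linear_imp_has_derivative[OF bl]
    by (rule has_derivative_add[OF has_derivative_const, simplified])
  have "((\<lambda>X. (E0 + f X) ** S) has_derivative (\<lambda>H. f H ** S)) (at (th n))"
    using bounded_linear.has_derivative[OF bounded_bilinear.bounded_linear_left[OF
          bounded_bilinear_matrix_mul] dE] .
  from has_derivative_inner[OF this dE]
  have d: "((\<lambda>X. ((E0 + f X) ** S) \<bullet> (E0 + f X)) has_derivative
      (\<lambda>H. ((E0 + f (th n)) ** S) \<bullet> f H + (f H ** S) \<bullet> (E0 + f (th n)))) (at (th n))" .
  have W: "?W = (E0 + f (th n)) ** S"
    using EX[of "th n"] by (simp add: weighted_residual_def Pi_prod_def)
  have "((E0 + f (th n)) ** S) \<bullet> f H + (f H ** S) \<bullet> (E0 + f (th n)) =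
      (- (1 / real N) *\<^sub>R velocity S B N th n) \<bullet> H" for H
  proof -
    have "(f H ** S) \<bullet> (E0 + f (th n)) = f H \<bullet> ?W"
      by (simp add: inner_matrix_mul_right sym W)
    moreover have "f H \<bullet> ?W = - (1 / (2 * real N)) * (H \<bullet> velocity S B N th n)"
      using inner_sandwich_weighted_residual[of N th n H S B] by (simp add: f_def)
    ultimately show ?thesis
      by (simp add: W[symmetric] inner_commute[of ?W] inner_commute[of _ H])
  qed
  then show ?thesis
    unfolding loss_eq using d by simp
qed

lemma flow_has_velocity:
  fixes S B :: "real^'n^'n" and Th :: "nat \<Rightarrow> real \<Rightarrow> real^'n^'n"
  assumes sym: "transpose S = S" and n: "1 \<le> n" "n \<le> N"
    and gradient_flow: "\<exists>G. ((\<lambda>X. loss S B N (\<lambda>k. if k = n then X else Th k t)) has_derivative (\<lambda>H. G \<bullet> H))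
          (at (Th n t))
        \<and> ((\<lambda>s. Th n s) has_vector_derivative (- (real N *\<^sub>R G))) (at t within {0..})"
  shows "((\<lambda>s. Th n s) has_vector_derivative velocity S B N (\<lambda>k. Th k t) n) (at t within {0..})"
proof -
  obtain G where
    grad: "((\<lambda>X. loss S B N (\<lambda>k. if k = n then X else Th k t)) has_derivative (\<lambda>H. G \<bullet> H)) (at (Th n t))"
    and flow: "((\<lambda>s. Th n s) has_vector_derivative (- (real N *\<^sub>R G))) (at t within {0..})"
    using gradient_flow by blast
  define G0 where "G0 = - (1 / real N) *\<^sub>R velocity S B N (\<lambda>k. Th k t) n"
  have "(\<lambda>H. G \<bullet> H) = (\<lambda>H. G0 \<bullet> H)"
    using has_derivative_unique[OF grad loss_has_derivative[OF sym n]] by (simp add: G0_def)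
  then have "G \<bullet> (G - G0) = G0 \<bullet> (G - G0)" by meson
  then have "(G - G0) \<bullet> (G - G0) = 0" by (simp add: inner_diff_left)
  then have "G = G0" by simp
  then show ?thesis using flow n by (simp add: G0_def)
qed

lemma segment_prod_has_vector_derivative:
  assumes "\<And>j. a < j \<Longrightarrow> j \<le> a + k \<Longrightarrow> ((\<lambda>s. F s j) has_vector_derivative F' j) (at t within T)"
  shows "((\<lambda>s. segment_prod (F s) a k) has_vector_derivative
     (\<Sum>j\<in>{a<..a+k}. segment_prod (F t) j (a + k - j) ** F' j ** segment_prod (F t) a (j - a - 1)))
     (at t within T)"
  using assms
proof (induction k)
  case (Suc k)
  let ?P = "\<lambda>j k. segment_prod (F t) j (a + k - j) ** F' j ** segment_prod (F t) a (j - a - 1)"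
  have IH: "((\<lambda>s. segment_prod (F s) a k) has_vector_derivative (\<Sum>j\<in>{a<..a+k}. ?P j k)) (at t within T)"
    using Suc by auto
  have dF: "((\<lambda>s. F s (a + Suc k)) has_vector_derivative F' (a + Suc k)) (at t within T)"
    using Suc.prems by auto
  have "F t (a + Suc k) ** (\<Sum>j\<in>{a<..a+k}. ?P j k) = (\<Sum>j\<in>{a<..a+k}. F t (a + Suc k) ** ?P j k)"
    by (rule bounded_bilinear.sum_right[OF bounded_bilinear_matrix_mul])
  also have "\<dots> = (\<Sum>j\<in>{a<..a+k}. ?P j (Suc k))"
  proof (rule sum.cong[OF refl])
    fix j assume "j \<in> {a<..a+k}"
    then have "a + Suc k - j = Suc (a + k - j)" and "j + Suc (a + k - j) = a + Suc k" by auto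
    then show "F t (a + Suc k) ** ?P j k = ?P j (Suc k)"
      by (simp add: matrix_mul_assoc)
  qed
  finally have e1: "F t (a + Suc k) ** (\<Sum>j\<in>{a<..a+k}. ?P j k) = (\<Sum>j\<in>{a<..a+k}. ?P j (Suc k))" .
  have "{a<..a + Suc k} = insert (a + Suc k) {a<..a+k}" by auto
  then have e2: "(\<Sum>j\<in>{a<..a + Suc k}. ?P j (Suc k)) =
      F' (a + Suc k) ** segment_prod (F t) a k + (\<Sum>j\<in>{a<..a+k}. ?P j (Suc k))"
    by simp
  show ?case
    using bounded_bilinear.has_vector_derivative[OF bounded_bilinear_matrix_mul dF IH]
    by (simp only: segment_prod.simps e1 e2 add.commute)
qed simp

lemma loss_dissipation:
  fixes S B :: "real^'n^'n" and Th :: "nat \<Rightarrow> real \<Rightarrow> real^'n^'n"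
  assumes sym: "transpose S = S"
    and dv: "\<And>n. 1 \<le> n \<Longrightarrow> n \<le> N \<Longrightarrow>
       ((\<lambda>s. Th n s) has_vector_derivative velocity S B N (\<lambda>k. Th k t) n) (at t within T)"
  shows "((\<lambda>s. loss S B N (\<lambda>k. Th k s)) has_vector_derivative
     (- (1 / real N) * (\<Sum>n\<in>{1..N}. (norm (velocity S B N (\<lambda>k. Th k t) n))^2))) (at t within T)"
proof -
  let ?th = "\<lambda>k. Th k t"
  let ?W = "weighted_residual S B N ?th"
  define V where "V n = velocity S B N ?th n" for n
  define F where "F s = layer N (\<lambda>k. Th k s)" for s
  define F' where "F' j = (1 / real N) *\<^sub>R V j" for j
  have dF: "((\<lambda>s. F s j) has_vector_derivative F' j) (at t within T)" if "0 < j" "j \<le> 0 + N" for j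
    unfolding F_def F'_def V_def layer_def using dv that
    by (auto intro!: derivative_eq_intros)
  define P' where "P' = (\<Sum>j\<in>{0<..0+N}. segment_prod (F t) j (0 + N - j) ** F' j ** segment_prod (F t) 0 (j - 0 - 1))"
  define E where "E s = segment_prod (F s) 0 N - B" for s
  have dE: "(E has_vector_derivative P') (at t within T)"
    unfolding E_def P'_def using segment_prod_has_vector_derivative[of 0 N F F' t T] dF
    by (simp add: has_vector_derivative_diff_const)
  have dl: "((\<lambda>s. (E s ** S) \<bullet> E s) has_vector_derivative
      ((E t ** S) \<bullet> P' + (E t ** 0 + P' ** S) \<bullet> E t)) (at t within T)"
    by (rule bounded_bilinear.has_vector_derivative[OF bounded_bilinear_inner
          bounded_bilinear.has_vector_derivative[OF bounded_bilinear_matrix_mul dE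
            has_vector_derivative_const] dE])
  have loss_eq: "loss S B N (\<lambda>k. Th k s) = (E s ** S) \<bullet> E s" for s
    by (simp add: loss_def Pi_prod_def piprod_eq_segment_prod sigma_sq_eq_inner E_def F_def)
  have W: "?W = E t ** S"
    by (simp add: weighted_residual_def piprod_eq_segment_prod E_def F_def)
  have "(E t ** S) \<bullet> P' + (E t ** 0 + P' ** S) \<bullet> E t = 2 * (?W \<bullet> P')"
    using inner_matrix_mul_right[of P' S "E t"] sym by (simp add: W inner_commute[of P'])
  also have "?W \<bullet> P' = (\<Sum>j\<in>{1..N}. ?W \<bullet> (upper_prod N ?th j ** F' j ** lower_prod N ?th j))"
  proof -
    have "{0<..0+N} = {1..N}" by auto
    then show ?thesis
      by (simp add: P'_def inner_sum_right upper_prod_def lower_prod_def F_def)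
  qed
  also have "\<dots> = (\<Sum>j\<in>{1..N}. - (1 / (2 * real N)) * (norm (V j))^2)"
  proof (rule sum.cong[OF refl])
    fix j
    show "?W \<bullet> (upper_prod N ?th j ** F' j ** lower_prod N ?th j) = - (1 / (2 * real N)) * (norm (V j))^2"
      using inner_sandwich_weighted_residual[of N ?th j "F' j" S B]
      by (simp add: inner_commute[of ?W] F'_def V_def power2_norm_eq_inner)
  qed
  finally have "(E t ** S) \<bullet> P' + (E t ** 0 + P' ** S) \<bullet> E t
      = - (1 / real N) * (\<Sum>n\<in>{1..N}. (norm (V n))^2)"
    by (simp add: sum_negf sum_divide_distrib[symmetric])
  then show ?thesis unfolding loss_eq V_def using dl by simp
qed

section \<open>Products of near-identity layers\<close>

lemma one_plus_div_power_le_exp: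
  assumes "0 \<le> u" "k \<le> N"
  shows "(1 + u / real N) ^ k \<le> exp u"
proof -
  have "(1 + u / real N) ^ k \<le> exp (u / real N) ^ k"
    using assms by (intro power_mono) (auto simp: exp_ge_add_one_self)
  also have "\<dots> = exp (real k * (u / real N))" by (rule exp_of_nat_mult[symmetric])
  also have "\<dots> \<le> exp u"
    using assms by (cases "N = 0") (auto simp: field_simps intro!: mult_left_mono)
  finally show ?thesis .
qed

lemma exp_neg_le_one_minus_div_power:
  assumes "0 \<le> u" "u \<le> 1/2" "1 \<le> N"
  shows "exp (- u) \<le> (1 - u / real N) ^ (N - 1)"
proof -
  define x where "x = u / real N"
  have x0: "0 \<le> x" and x1: "x \<le> 1/2" using assms by (auto simp: x_def field_simps)
  have "1 + x / (1 - x) \<le> exp (x / (1 - x))" by (rule exp_ge_add_one_self)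
  then have a: "exp (- (x / (1 - x))) \<le> 1 - x"
    using x1 by (simp add: exp_minus field_simps)
  have "real (N - 1) * (x / (1 - x)) = u * ((real N - 1) / (real N - u))"
    using assms x1 by (simp add: x_def of_nat_diff field_simps)
  also have "\<dots> \<le> u"
    using assms mult_left_mono[of "(real N - 1) / (real N - u)" 1 u] by (simp add: field_simps)
  finally have "exp (- u) \<le> exp (- (x / (1 - x))) ^ (N - 1)"
    by (simp add: exp_of_nat_mult[symmetric])
  also have "\<dots> \<le> (1 - x) ^ (N - 1)"
    by (intro power_mono a) simp
  finally show ?thesis by (simp add: x_def)
qed

context
  fixes N :: nat and th :: "nat \<Rightarrow> real^'n^'n" and u :: real
  assumes N: "1 \<le> N" and u0: "0 \<le> u"
    and bnd: "\<And>k. 1 \<le> k \<Longrightarrow> k \<le> N \<Longrightarrow> spec_norm (th k) \<le> u"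
begin

lemma spec_norm_layer_bounded: "1 \<le> k \<Longrightarrow> k \<le> N \<Longrightarrow> spec_norm (layer N th k) \<le> 1 + u / real N"
  using spec_norm_layer_le[of N th k] bnd[of k] N by (smt (verit) divide_right_mono of_nat_0_le_iff)

lemma spec_norm_upper_prod_power: "n \<le> N \<Longrightarrow> spec_norm (upper_prod N th n) \<le> (1 + u / real N) ^ (N - n)"
  unfolding upper_prod_def using u0 N by (intro spec_norm_segment_prod_le spec_norm_layer_bounded) auto

lemma spec_norm_lower_prod_power:
  "1 \<le> n \<Longrightarrow> n \<le> N \<Longrightarrow> spec_norm (lower_prod N th n) \<le> (1 + u / real N) ^ (n - 1)"
  unfolding lower_prod_def using u0 N by (intro spec_norm_segment_prod_le spec_norm_layer_bounded) auto

lemma spec_norm_upper_prod: "n \<le> N \<Longrightarrow> spec_norm (upper_prod N th n) \<le> exp u"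
  by (rule order_trans[OF spec_norm_upper_prod_power one_plus_div_power_le_exp[OF u0]]) auto

lemma spec_norm_lower_prod: "1 \<le> n \<Longrightarrow> n \<le> N \<Longrightarrow> spec_norm (lower_prod N th n) \<le> exp u"
  by (rule order_trans[OF spec_norm_lower_prod_power one_plus_div_power_le_exp[OF u0]]) auto

lemma spec_norm_piprod: "spec_norm (piprod N th N) \<le> exp u"
proof -
  have "spec_norm (piprod N th N) \<le> (1 + u / real N) ^ N"
    unfolding piprod_eq_segment_prod using u0 N
    by (intro spec_norm_segment_prod_le spec_norm_layer_bounded) auto
  also have "\<dots> \<le> exp u" using u0 by (rule one_plus_div_power_le_exp) simp
  finally show ?thesis .
qed

lemma spec_norm_upper_lower_prod:
  assumes "1 \<le> n" "n \<le> N"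
  shows "spec_norm (upper_prod N th n) * spec_norm (lower_prod N th n) \<le> exp u"
proof -
  have "spec_norm (upper_prod N th n) * spec_norm (lower_prod N th n)
      \<le> (1 + u / real N) ^ (N - n) * (1 + u / real N) ^ (n - 1)"
    using assms u0
    by (intro mult_mono spec_norm_upper_prod_power spec_norm_lower_prod_power) (auto simp: spec_norm_nonneg)
  also have "\<dots> = (1 + u / real N) ^ (N - 1)"
    using assms by (simp add: power_add[symmetric])
  also have "\<dots> \<le> exp u" using u0 by (rule one_plus_div_power_le_exp) simp
  finally show ?thesis .
qed

lemma upper_lower_prod_bounded_below:
  assumes "1 \<le> n" "n \<le> N" "u \<le> 1/2"
  obtains a b where "bounded_below (transpose (upper_prod N th n)) a" "bounded_below (lower_prod N th n) b"
    "0 \<le> a" "0 \<le> b" "exp (- u) \<le> a * b"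
proof -
  let ?c = "1 - u / real N"
  have c0: "0 \<le> ?c" using assms N by (simp add: field_simps)
  have c_le: "?c \<le> 1 - spec_norm (th k) / real N" if "1 \<le> k" "k \<le> N" for k
    using bnd[OF that] by (simp add: divide_right_mono)
  have "bounded_below (transpose (upper_prod N th n)) (?c ^ (N - n))"
    unfolding upper_prod_def using assms c_le
    by (intro bounded_below_transpose_segment_prod bounded_below_mono[OF bounded_below_transpose_layer] c0)
      auto
  moreover have "bounded_below (lower_prod N th n) (?c ^ (n - 1))"
    unfolding lower_prod_def using assms c_le
    by (intro bounded_below_segment_prod bounded_below_mono[OF bounded_below_layer] c0) auto
  moreover have "exp (- u) \<le> ?c ^ (N - n) * ?c ^ (n - 1)"
    using assms u0 N exp_neg_le_one_minus_div_power[of u N] by (simp add: power_add[symmetric])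
  ultimately show ?thesis using that c0 by simp
qed

lemma spec_norm_velocity_le:
  assumes "1 \<le> n" "n \<le> N"
  shows "spec_norm (velocity S B N th n) \<le> 2 * exp u * norm (weighted_residual S B N th)"
proof -
  let ?U = "upper_prod N th n" and ?L = "lower_prod N th n" and ?W = "weighted_residual S B N th"
  have "spec_norm (velocity S B N th n) \<le> 2 * (spec_norm ?U * spec_norm ?W * spec_norm ?L)"
    using spec_norm_mult3[of "transpose ?U" ?W "transpose ?L"]
    by (simp add: velocity_def spec_norm_scaleR)
  also have "\<dots> \<le> 2 * ((spec_norm ?U * spec_norm ?L) * norm ?W)"
    by (simp add: mult_ac mult_left_mono spec_norm_le_norm spec_norm_nonneg)
  also have "\<dots> \<le> 2 * (exp u * norm ?W)"
    using spec_norm_upper_lower_prod[OF assms] by (simp add: mult_right_mono)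
  finally show ?thesis by simp
qed

lemma norm_velocity_ge:
  assumes "1 \<le> n" "n \<le> N" "u \<le> 1/2"
  shows "2 * exp (- u) * norm (weighted_residual S B N th) \<le> norm (velocity S B N th n)"
proof -
  let ?U = "upper_prod N th n" and ?L = "lower_prod N th n" and ?W = "weighted_residual S B N th"
  obtain a b where ab: "bounded_below (transpose ?U) a" "bounded_below ?L b" "0 \<le> a" "0 \<le> b"
    "exp (- u) \<le> a * b"
    using upper_lower_prod_bounded_below[OF assms] by blast
  have "b * norm ?W \<le> norm (?L ** transpose ?W)"
    using norm_matrix_mul_ge[OF ab(2,4), of "transpose ?W"] by (simp add: norm_transpose_matrix)
  also have "\<dots> = norm (?W ** transpose ?L)"
    by (metis matrix_transpose_mul norm_transpose_matrix transpose_transpose)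
  finally have "a * (b * norm ?W) \<le> a * norm (?W ** transpose ?L)"
    using ab(3) by (rule mult_left_mono)
  also have "\<dots> \<le> norm (transpose ?U ** ?W ** transpose ?L)"
    using norm_matrix_mul_ge[OF ab(1,3), of "?W ** transpose ?L"] by (simp add: matrix_mul_assoc)
  finally have "a * b * norm ?W \<le> norm (transpose ?U ** ?W ** transpose ?L)"
    by (simp add: mult.assoc)
  then have "exp (- u) * norm ?W \<le> norm (transpose ?U ** ?W ** transpose ?L)"
    using mult_right_mono[OF ab(5) norm_ge_zero[of ?W]] by linarith
  then show ?thesis by (simp add: velocity_def)
qed

lemma spec_norm_weighted_residual: "spec_norm (weighted_residual S B N th) \<le> (exp u + spec_norm B) * spec_norm S"
proof -
  have "spec_norm (weighted_residual S B N th) \<le> spec_norm (piprod N th N - B) * spec_norm S"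
    unfolding weighted_residual_def by (rule spec_norm_mult)
  also have "\<dots> \<le> (exp u + spec_norm B) * spec_norm S"
    by (intro mult_right_mono order_trans[OF spec_norm_triangle_diff] add_mono spec_norm_piprod)
       (auto simp: spec_norm_nonneg)
  finally show ?thesis .
qed

end

section \<open>Calculus on the half-line\<close>

lemma le_initial_if_deriv_nonpos:
  fixes f f' :: "real \<Rightarrow> real"
  assumes "0 \<le> t"
    and "\<And>s. s \<in> {0..t} \<Longrightarrow> (f has_vector_derivative f' s) (at s within {0..})"
    and "\<And>s. s \<in> {0..t} \<Longrightarrow> f' s \<le> 0"
  shows "f t \<le> f 0"
proof -
  have "(f' has_integral (f t - f 0)) {0..t}"
    by (rule fundamental_theorem_of_calculus[OF assms(1)])
       (auto intro: has_vector_derivative_within_subset[OF assms(2)])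
  then have "((\<lambda>s. - f' s) has_integral - (f t - f 0)) {0..t}"
    using has_integral_neg by blast
  then have "0 \<le> - (f t - f 0)"
    by (rule has_integral_nonneg) (use assms(3) in auto)
  then show ?thesis by simp
qed

lemma norm_increment_le:
  fixes f f' :: "real \<Rightarrow> 'a::euclidean_space" and g G :: "real \<Rightarrow> real"
  assumes "0 \<le> t"
    and "\<And>s. s \<in> {0..t} \<Longrightarrow> (f has_vector_derivative f' s) (at s within {0..})"
    and "\<And>s. s \<in> {0..t} \<Longrightarrow> (G has_vector_derivative g s) (at s within {0..})"
    and "\<And>s. s \<in> {0..t} \<Longrightarrow> norm (f' s) \<le> g s"
  shows "norm (f t - f 0) \<le> G t - G 0"
proof -
  have i1: "(f' has_integral (f t - f 0)) {0..t}"
    by (rule fundamental_theorem_of_calculus[OF assms(1)])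
       (auto intro: has_vector_derivative_within_subset[OF assms(2)])
  have i2: "(g has_integral (G t - G 0)) {0..t}"
    by (rule fundamental_theorem_of_calculus[OF assms(1)])
       (auto intro: has_vector_derivative_within_subset[OF assms(3)])
  have "norm (integral {0..t} f') \<le> integral {0..t} g"
    by (rule integral_norm_bound_integral) (use i1 i2 assms(4) in auto)
  then show ?thesis using i1 i2 by (simp add: integral_unique)
qed

lemma spec_norm_increment_le:
  fixes F F' :: "real \<Rightarrow> real^'n^'n" and g G :: "real \<Rightarrow> real"
  assumes t: "0 \<le> t"
    and dF: "\<And>s. s \<in> {0..t} \<Longrightarrow> (F has_vector_derivative F' s) (at s within {0..})"
    and dG: "\<And>s. s \<in> {0..t} \<Longrightarrow> (G has_vector_derivative g s) (at s within {0..})"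
    and bound: "\<And>s. s \<in> {0..t} \<Longrightarrow> spec_norm (F' s) \<le> g s"
  shows "spec_norm (F t - F 0) \<le> G t - G 0"
proof (rule spec_norm_leI)
  fix x
  have "norm ((\<lambda>s. F s *v x) t - (\<lambda>s. F s *v x) 0) \<le> G t * norm x - G 0 * norm x"
  proof (rule norm_increment_le[OF t])
    fix s assume s: "s \<in> {0..t}"
    show "((\<lambda>s. F s *v x) has_vector_derivative F' s *v x) (at s within {0..})"
      using dF[OF s] by (rule has_vector_derivative_matrix_vector_mult)
    show "((\<lambda>s. G s * norm x) has_vector_derivative g s * norm x) (at s within {0..})"
      using dG[OF s] by (simp add: has_real_derivative_iff_has_vector_derivative[symmetric] DERIV_cmult_right)
    show "norm (F' s *v x) \<le> g s * norm x"
      using spec_norm_bound[of "F' s" x] bound[OF s] by (meson mult_right_mono norm_ge_zero order_trans)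
  qed
  then show "norm ((F t - F 0) *v x) \<le> (G t - G 0) * norm x"
    by (simp add: matrix_vector_mult_diff_rdistrib algebra_simps)
qed

lemma spec_norm_increment_le_const:
  fixes F F' :: "real \<Rightarrow> real^'n^'n"
  assumes "0 \<le> t"
    and "\<And>s. s \<in> {0..t} \<Longrightarrow> (F has_vector_derivative F' s) (at s within {0..})"
    and "\<And>s. s \<in> {0..t} \<Longrightarrow> spec_norm (F' s) \<le> K"
  shows "spec_norm (F t - F 0) \<le> K * t"
proof -
  have "((\<lambda>s. K * s) has_real_derivative K) (at s within {0..})" for s
    by (auto intro!: derivative_eq_intros)
  then show ?thesis using spec_norm_increment_le[OF assms(1,2), of "\<lambda>s. K * s" "\<lambda>_. K"] assms(3)
    by (simp add: has_real_derivative_iff_has_vector_derivative)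
qed

lemma gronwall_linear:
  fixes V V' :: "real \<Rightarrow> real"
  assumes t: "0 \<le> t" and al: "0 < \<alpha>" and be: "0 \<le> \<beta>"
    and dV: "\<And>s. s \<in> {0..t} \<Longrightarrow> (V has_real_derivative V' s) (at s within {0..})"
    and V': "\<And>s. s \<in> {0..t} \<Longrightarrow> V' s \<le> \<alpha> * V s + \<beta>"
  shows "V t \<le> exp (\<alpha> * t) * (V 0 + \<beta> / \<alpha>)"
proof -
  let ?E = "\<lambda>r. exp (- \<alpha> * r) * (V r + \<beta> / \<alpha>)"
  have "?E t \<le> ?E 0"
  proof (rule le_initial_if_deriv_nonpos[OF t])
    fix r assume r: "r \<in> {0..t}"
    show "(?E has_vector_derivative exp (- \<alpha> * r) * (V' r - \<alpha> * V r - \<beta>)) (at r within {0..})"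
      unfolding has_real_derivative_iff_has_vector_derivative[symmetric]
      using al by (auto intro!: derivative_eq_intros dV[OF r] simp: field_simps)
    show "exp (- \<alpha> * r) * (V' r - \<alpha> * V r - \<beta>) \<le> 0"
      using V'[OF r] by (simp add: mult_nonneg_nonpos)
  qed
  then have "exp (\<alpha> * t) * ?E t \<le> exp (\<alpha> * t) * (V 0 + \<beta> / \<alpha>)"
    by (intro mult_left_mono) auto
  then have "V t + \<beta> / \<alpha> \<le> exp (\<alpha> * t) * (V 0 + \<beta> / \<alpha>)"
    by (simp add: mult.assoc[symmetric] exp_add[symmetric])
  then show ?thesis using al be by (smt (verit) divide_nonneg_pos)
qed

lemma continuous_induction_bound:
  fixes f :: "'i \<Rightarrow> real \<Rightarrow> real"
  assumes I: "finite I" and cont: "\<And>i. i \<in> I \<Longrightarrow> continuous_on {0..} (f i)"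
    and init: "\<And>i. i \<in> I \<Longrightarrow> f i 0 < c"
    and improve: "\<And>T i. 0 < T \<Longrightarrow> (\<And>s j. 0 \<le> s \<Longrightarrow> s \<le> T \<Longrightarrow> j \<in> I \<Longrightarrow> f j s \<le> c) \<Longrightarrow>
        i \<in> I \<Longrightarrow> f i T < c"
    and i: "i \<in> I" and s: "0 \<le> s"
  shows "f i s \<le> c"
proof (rule ccontr)
  assume "\<not> f i s \<le> c"
  define A where "A = (\<Union>j\<in>I. {0..} \<inter> f j -` {c..})"
  have "closed A"
    unfolding A_def using I cont by (intro closed_UN ballI continuous_closed_preimage) auto
  moreover have sA: "s \<in> A" unfolding A_def using \<open>\<not> f i s \<le> c\<close> s i by force
  moreover have bdd: "bdd_below A" unfolding A_def by (rule bdd_belowI[of _ 0]) auto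
  ultimately have TA: "Inf A \<in> A" using closed_contains_Inf by blast
  define T where "T = Inf A"
  have below: "f j r < c" if "0 \<le> r" "r < T" "j \<in> I" for r j
  proof (rule ccontr)
    assume "\<not> f j r < c"
    then have "r \<in> A" unfolding A_def using that by (force simp: not_less)
    then show False using cInf_lower[OF _ bdd] that by (force simp: T_def)
  qed
  have Tpos: "0 < T"
    using TA init by (force simp: A_def T_def order.order_iff_strict)
  have "f j r \<le> c" if "0 \<le> r" "r \<le> T" "j \<in> I" for r j
  proof (cases "r < T")
    case False
    have "closed ({0..T} \<inter> f j -` {..c})"
      using continuous_on_subset[OF cont[OF \<open>j \<in> I\<close>]]
      by (intro continuous_closed_preimage) auto
    moreover have "{0..<T} \<subseteq> {0..T} \<inter> f j -` {..c}" using below that by fastforce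
    ultimately have "closure {0..<T} \<subseteq> {0..T} \<inter> f j -` {..c}" by (rule closure_minimal[rotated])
    moreover have "T \<in> closure {0..<T}" using Tpos by simp
    ultimately show ?thesis using False that by auto
  qed (use below that in force)
  then have "f j T < c" if "j \<in> I" for j using improve[OF Tpos] that by blast
  then show False using TA by (force simp: A_def T_def)
qed

lemma sqrt_exp: "sqrt (exp x) = exp (x / 2)"
proof -
  have "exp x = (exp (x/2))^2" by (simp add: power2_eq_square exp_add[symmetric])
  then show ?thesis by simp
qed

section \<open>The trajectory stays in the ball of radius 1/2\<close>

locale gradient_flow =
  fixes S B :: "real^'n^'n" and m M :: real and N :: nat and Th :: "nat \<Rightarrow> real \<Rightarrow> real^'n^'n"
  assumes sym: "transpose S = S"
    and m_min: "\<forall>lam. is_eigenvalue S lam \<longrightarrow> m \<le> lam"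
    and M_max: "\<forall>lam. is_eigenvalue S lam \<longrightarrow> lam \<le> M"
    and m_pos: "m > 0" and M_pos: "M > 0"
    and psd: "\<And>y. 0 \<le> y \<bullet> (S *v y)"
    and N: "1 \<le> N"
    and flow: "\<And>n t. 1 \<le> n \<Longrightarrow> n \<le> N \<Longrightarrow> 0 \<le> t \<Longrightarrow>
        ((\<lambda>s. Th n s) has_vector_derivative velocity S B N (\<lambda>k. Th k t) n) (at t within {0..})"
begin

definition loss_at :: "real \<Rightarrow> real" where
  "loss_at s = loss S B N (\<lambda>k. Th k s)"

definition decay_rate :: real where
  "decay_rate = 4 * exp (-1) * m"

lemma loss_at_bounds:
  "(norm (weighted_residual S B N (\<lambda>k. Th k s)))^2 \<le> M * loss_at s"
  "m * loss_at s \<le> (norm (weighted_residual S B N (\<lambda>k. Th k s)))^2"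
  "0 \<le> loss_at s"
  unfolding loss_at_def loss_def weighted_residual_def Pi_prod_def
  by (rule norm_mult_sq_le_sigma_sq[OF sym M_max psd], rule sigma_sq_le_norm_mult_sq[OF sym m_min m_pos],
      rule sigma_sq_nonneg[OF sym psd])

lemma polyak_lojasiewicz:
  assumes b: "\<And>n. 1 \<le> n \<Longrightarrow> n \<le> N \<Longrightarrow> spec_norm (Th n s) \<le> 1/2"
  shows "decay_rate * loss_at s \<le> (1 / real N) * (\<Sum>n\<in>{1..N}. (norm (velocity S B N (\<lambda>k. Th k s) n))^2)"
proof -
  let ?W = "norm (weighted_residual S B N (\<lambda>k. Th k s))"
  have each: "decay_rate * loss_at s \<le> (norm (velocity S B N (\<lambda>k. Th k s) n))^2" if "n \<in> {1..N}" for n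
  proof -
    have "2 * exp (- (1/2)) * ?W \<le> norm (velocity S B N (\<lambda>k. Th k s) n)"
      by (rule norm_velocity_ge[OF N, where u="1/2"]) (use b that in force)+
    then have "(2 * exp (- (1/2)) * ?W)^2 \<le> (norm (velocity S B N (\<lambda>k. Th k s) n))^2"
      by (intro power_mono) auto
    moreover have "(2 * exp (- (1/2)) * ?W)^2 = 4 * exp (-1) * ?W^2"
      by (simp add: power_mult_distrib power2_eq_square exp_add[symmetric])
    moreover have "decay_rate * loss_at s \<le> 4 * exp (-1) * ?W^2"
      using loss_at_bounds(2)[of s] by (simp add: decay_rate_def mult.assoc)
    ultimately show ?thesis by linarith
  qed
  have "(\<Sum>n\<in>{1..N}. decay_rate * loss_at s) \<le> (\<Sum>n\<in>{1..N}. (norm (velocity S B N (\<lambda>k. Th k s) n))^2)"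
    by (rule sum_mono[OF each])
  then have "real N * (decay_rate * loss_at s) \<le> (\<Sum>n\<in>{1..N}. (norm (velocity S B N (\<lambda>k. Th k s) n))^2)"
    by simp
  then show ?thesis
    using N by (simp add: field_simps)
qed

lemma loss_at_decay:
  assumes b: "\<And>s n. 0 \<le> s \<Longrightarrow> s \<le> T \<Longrightarrow> 1 \<le> n \<Longrightarrow> n \<le> N \<Longrightarrow> spec_norm (Th n s) \<le> 1/2"
    and s: "0 \<le> s" "s \<le> T"
  shows "loss_at s \<le> loss_at 0 * exp (- decay_rate * s)"
proof -
  define rate where "rate t = (1 / real N) * (\<Sum>n\<in>{1..N}. (norm (velocity S B N (\<lambda>k. Th k t) n))^2)" for t
  have "loss_at s * exp (decay_rate * s) \<le> loss_at 0 * exp (decay_rate * 0)"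
  proof (rule le_initial_if_deriv_nonpos[OF s(1)])
    fix t assume t: "t \<in> {0..s}"
    have "((\<lambda>s. loss S B N (\<lambda>k. Th k s)) has_vector_derivative
        - (1 / real N) * (\<Sum>n\<in>{1..N}. (norm (velocity S B N (\<lambda>k. Th k t) n))^2)) (at t within {0..})"
      by (rule loss_dissipation[OF sym]) (use flow t in auto)
    then have "(loss_at has_real_derivative - rate t) (at t within {0..})"
      by (simp add: loss_at_def[abs_def] rate_def has_real_derivative_iff_has_vector_derivative)
    then show "((\<lambda>t. loss_at t * exp (decay_rate * t)) has_vector_derivative
        (- rate t + decay_rate * loss_at t) * exp (decay_rate * t)) (at t within {0..})"
      unfolding has_real_derivative_iff_has_vector_derivative[symmetric]
      by (auto intro!: derivative_eq_intros simp: algebra_simps)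
    have "decay_rate * loss_at t \<le> rate t"
      unfolding rate_def by (rule polyak_lojasiewicz) (use b t s in auto)
    then show "(- rate t + decay_rate * loss_at t) * exp (decay_rate * t) \<le> 0"
      by (simp add: mult_nonpos_nonneg)
  qed
  then have "loss_at s * exp (decay_rate * s) * exp (- decay_rate * s) \<le> loss_at 0 * exp (- decay_rate * s)"
    by simp
  then show ?thesis by (simp add: mult.assoc exp_add[symmetric])
qed

lemma spec_norm_velocity_decay:
  assumes b: "\<And>s n. 0 \<le> s \<Longrightarrow> s \<le> T \<Longrightarrow> 1 \<le> n \<Longrightarrow> n \<le> N \<Longrightarrow> spec_norm (Th n s) \<le> 1/2"
    and n: "1 \<le> n" "n \<le> N" and s: "0 \<le> s" "s \<le> T"
  shows "spec_norm (velocity S B N (\<lambda>k. Th k s) n)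
    \<le> 2 * exp (1/2) * sqrt (M * loss_at 0) * exp (- decay_rate * s / 2)"
proof -
  let ?W = "norm (weighted_residual S B N (\<lambda>k. Th k s))"
  have "spec_norm (velocity S B N (\<lambda>k. Th k s) n) \<le> 2 * exp (1/2) * ?W"
    by (rule spec_norm_velocity_le[OF N, where u="1/2"]) (use b s n in force)+
  also have "?W \<le> sqrt (M * loss_at s)"
    using loss_at_bounds(1)[of s] real_le_rsqrt by blast
  also have "\<dots> \<le> sqrt (M * (loss_at 0 * exp (- decay_rate * s)))"
    using loss_at_decay[OF b s] M_pos by (intro real_sqrt_le_mono mult_left_mono) auto
  also have "\<dots> = sqrt (M * loss_at 0) * exp (- decay_rate * s / 2)"
    by (simp add: real_sqrt_mult mult.assoc sqrt_exp)
  finally show ?thesis by (simp add: mult.assoc)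
qed

text \<open>The velocity decays exponentially, so its integral stays bounded.\<close>

lemma drift_bound:
  assumes T: "0 \<le> T"
    and b: "\<And>s n. 0 \<le> s \<Longrightarrow> s \<le> T \<Longrightarrow> 1 \<le> n \<Longrightarrow> n \<le> N \<Longrightarrow> spec_norm (Th n s) \<le> 1/2"
    and n: "1 \<le> n" "n \<le> N"
  shows "spec_norm (Th n T - Th n 0) \<le> exp (3/2) * sqrt (M * loss_at 0) / m"
proof -
  define c0 where "c0 = 2 * exp (1/2) * sqrt (M * loss_at 0)"
  have kp: "decay_rate > 0" using m_pos by (simp add: decay_rate_def)
  let ?G = "\<lambda>s. - (2 / decay_rate) * c0 * exp (- decay_rate * s / 2)"
  have "spec_norm (Th n T - Th n 0) \<le> ?G T - ?G 0"
  proof (rule spec_norm_increment_le[OF T])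
    fix s assume s: "s \<in> {0..T}"
    show "(Th n has_vector_derivative velocity S B N (\<lambda>k. Th k s) n) (at s within {0..})"
      using s n by (intro flow) auto
    have "(?G has_real_derivative
        - (2 / decay_rate) * c0 * (exp (- decay_rate * s / 2) * (- decay_rate / 2))) (at s within {0..})"
      by (auto intro!: derivative_eq_intros)
    then show "(?G has_vector_derivative c0 * exp (- decay_rate * s / 2)) (at s within {0..})"
      using kp by (simp add: has_real_derivative_iff_has_vector_derivative)
    show "spec_norm (velocity S B N (\<lambda>k. Th k s) n) \<le> c0 * exp (- decay_rate * s / 2)"
      unfolding c0_def using s by (intro spec_norm_velocity_decay[OF b n]) auto
  qed
  also have "\<dots> = 2 * c0 / decay_rate * (1 - exp (- decay_rate * T / 2))"
    by (simp add: algebra_simps)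
  also have "\<dots> \<le> 2 * c0 / decay_rate"
    using kp loss_at_bounds(3)[of 0] M_pos by (intro mult_left_le) (auto simp: c0_def)
  also have "\<dots> = exp (3/2) * sqrt (M * loss_at 0) / m"
  proof -
    have "exp (1/2) / exp (-1) = exp (3/2::real)" by (simp add: exp_diff[symmetric])
    then show ?thesis using m_pos by (simp add: c0_def decay_rate_def field_simps)
  qed
  finally show ?thesis .
qed

lemma drift_small:
  assumes "sqrt (loss_at 0) < m / (4 * sqrt (2 * M * exp 3))"
  shows "exp (3/2) * sqrt (M * loss_at 0) / m < 1/4"
proof -
  have "sqrt (2 * M * exp 3) = sqrt 2 * sqrt M * exp (3/2)"
    by (simp add: real_sqrt_mult sqrt_exp)
  then have "m / (4 * sqrt (2 * M * exp 3)) \<le> m / (4 * (sqrt M * exp (3/2)))"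
    using m_pos M_pos by (intro divide_left_mono mult_left_mono) (auto simp: mult_ac)
  with assms have "sqrt (loss_at 0) < m / (4 * (sqrt M * exp (3/2)))" by linarith
  then have "sqrt (loss_at 0) * (4 * (sqrt M * exp (3/2))) < m"
    using M_pos by (simp add: pos_less_divide_eq)
  then show ?thesis using m_pos by (simp add: real_sqrt_mult field_simps)
qed

theorem theta_bounded:
  assumes init: "\<And>n. 1 \<le> n \<Longrightarrow> n \<le> N \<Longrightarrow> spec_norm (Th n 0) \<le> 1/4"
    and small: "sqrt (loss_at 0) < m / (4 * sqrt (2 * M * exp 3))"
    and n: "1 \<le> n" "n \<le> N" and s: "0 \<le> s"
  shows "spec_norm (Th n s) \<le> 1/2"
proof (rule continuous_induction_bound[where f = "\<lambda>k s. spec_norm (Th k s)" and I = "{1..N}"])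
  show "finite {1..N}" "n \<in> {1..N}" "0 \<le> s" using n s by auto
  show "continuous_on {0..} (\<lambda>s. spec_norm (Th k s))" if "k \<in> {1..N}" for k
  proof -
    have "continuous_on {0..} (Th k)"
      unfolding continuous_on_eq_continuous_within
      using flow that by (auto intro: has_vector_derivative_continuous)
    then show ?thesis using continuous_on_compose2[OF continuous_on_spec_norm] by auto
  qed
  show "spec_norm (Th k T) < 1/2"
    if "0 < T" and b: "\<And>s j. 0 \<le> s \<Longrightarrow> s \<le> T \<Longrightarrow> j \<in> {1..N} \<Longrightarrow> spec_norm (Th j s) \<le> 1/2"
      and k: "k \<in> {1..N}" for T k
  proof -
    have "spec_norm (Th k T) \<le> spec_norm (Th k 0) + spec_norm (Th k T - Th k 0)"
      using spec_norm_triangle[of "Th k 0" "Th k T - Th k 0"] by simp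
    also have "\<dots> \<le> 1/4 + exp (3/2) * sqrt (M * loss_at 0) / m"
      using that by (intro add_mono init drift_bound) auto
    also have "\<dots> < 1/2" using drift_small[OF small] by linarith
    finally show ?thesis .
  qed
  show "spec_norm (Th k 0) < 1/2" if "k \<in> {1..N}" for k
    using init[of k] that by simp
qed

end

section \<open>Regularity of the velocity field\<close>

definition residual_bound :: "real^'n^'n \<Rightarrow> real^'n^'n \<Rightarrow> real" where
  "residual_bound S B = (exp (1/2) + spec_norm B) * spec_norm S"

lemma residual_bound_nonneg: "0 \<le> residual_bound S B"
  by (simp add: residual_bound_def spec_norm_nonneg)

lemma spec_norm_sandwich_diff:
  fixes A1 A2 W1 W2 C1 C2 :: "real^'n^'n"
  shows "spec_norm (A1 ** W1 ** C1 - A2 ** W2 ** C2) \<le>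
     spec_norm (A1 - A2) * spec_norm W1 * spec_norm C1 + spec_norm A2 * spec_norm (W1 - W2) * spec_norm C1
     + spec_norm A2 * spec_norm W2 * spec_norm (C1 - C2)"
proof -
  have "A1 ** W1 ** C1 - A2 ** W2 ** C2
      = (A1 - A2) ** W1 ** C1 + A2 ** (W1 - W2) ** C1 + A2 ** W2 ** (C1 - C2)"
    by (simp add: matrix_diff_ldistrib matrix_diff_rdistrib)
  then show ?thesis
    by (simp only:) (rule order_trans[OF spec_norm_triangle add_mono[OF order_trans[OF spec_norm_triangle
          add_mono[OF spec_norm_mult3 spec_norm_mult3]] spec_norm_mult3]])
qed

lemma upper_prod_step:
  assumes "Suc n \<le> N"
  shows "upper_prod N th n = upper_prod N th (Suc n) ** layer N th (Suc n)"
proof -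
  have "upper_prod N th n = segment_prod (layer N th) n (1 + (N - n - 1))"
    unfolding upper_prod_def using assms by (simp add: Suc_diff_Suc)
  also have "\<dots> = segment_prod (layer N th) (n + 1) (N - n - 1) ** segment_prod (layer N th) n 1"
    by (rule segment_prod_add)
  finally show ?thesis by (simp add: upper_prod_def)
qed

lemma lower_prod_step: "1 \<le> n \<Longrightarrow> lower_prod N th (Suc n) = layer N th n ** lower_prod N th n"
  unfolding lower_prod_def by (cases n) auto

context
  fixes N :: nat and th :: "nat \<Rightarrow> real^'n^'n"
  assumes N: "1 \<le> N" and bnd: "\<And>k. 1 \<le> k \<Longrightarrow> k \<le> N \<Longrightarrow> spec_norm (th k) \<le> 1/2"
begin

lemma spec_norm_upper_prod_step:
  assumes "1 \<le> n" "n + 1 \<le> N"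
  shows "spec_norm (upper_prod N th (n+1) - upper_prod N th n) \<le> exp (1/2) * (1/2) / real N"
proof -
  have "upper_prod N th (n+1) - upper_prod N th n = (- 1 / real N) *\<^sub>R (upper_prod N th (n+1) ** th (n+1))"
    using assms by (simp add: upper_prod_step layer_def matrix_add_ldistrib matrix_mul_scaleR_right)
  then have "spec_norm (upper_prod N th (n+1) - upper_prod N th n)
      \<le> (1 / real N) * (spec_norm (upper_prod N th (n+1)) * spec_norm (th (n+1)))"
    by (simp add: spec_norm_scaleR divide_right_mono spec_norm_mult)
  also have "\<dots> \<le> (1 / real N) * (exp (1/2) * (1/2))"
    using assms by (intro mult_left_mono mult_mono bnd spec_norm_upper_prod[OF N _ bnd])
      (auto simp: spec_norm_nonneg)
  finally show ?thesis by simp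
qed

lemma spec_norm_lower_prod_step:
  assumes "1 \<le> n" "n + 1 \<le> N"
  shows "spec_norm (lower_prod N th (n+1) - lower_prod N th n) \<le> (1/2) * exp (1/2) / real N"
proof -
  have "lower_prod N th (n+1) - lower_prod N th n = (1 / real N) *\<^sub>R (th n ** lower_prod N th n)"
    using assms by (simp add: lower_prod_step layer_def matrix_add_rdistrib matrix_mul_scaleR_left)
  then have "spec_norm (lower_prod N th (n+1) - lower_prod N th n)
      \<le> (1 / real N) * (spec_norm (th n) * spec_norm (lower_prod N th n))"
    by (simp add: spec_norm_scaleR divide_right_mono spec_norm_mult)
  also have "\<dots> \<le> (1 / real N) * ((1/2) * exp (1/2))"
    using assms by (intro mult_left_mono mult_mono bnd spec_norm_lower_prod[OF N _ bnd])
      (auto simp: spec_norm_nonneg)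
  finally show ?thesis by simp
qed

lemma spec_norm_velocity_step:
  assumes n: "1 \<le> n" "n + 1 \<le> N"
  shows "spec_norm (velocity S B N th (n+1) - velocity S B N th n) \<le> 2 * exp 1 * residual_bound S B / real N"
proof -
  let ?U1 = "transpose (upper_prod N th (n+1))" and ?U2 = "transpose (upper_prod N th n)"
  let ?L1 = "transpose (lower_prod N th (n+1))" and ?L2 = "transpose (lower_prod N th n)"
  let ?W = "weighted_residual S B N th" and ?w = "residual_bound S B"
  have W: "spec_norm ?W \<le> ?w"
    unfolding residual_bound_def by (rule spec_norm_weighted_residual[where u="1/2", OF N _ bnd]) simp
  have "spec_norm (velocity S B N th (n+1) - velocity S B N th n) = 2 * spec_norm (?U1 ** ?W ** ?L1 - ?U2 ** ?W ** ?L2)"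
    using spec_norm_scaleR[of "-2" "?U1 ** ?W ** ?L1 - ?U2 ** ?W ** ?L2"]
    by (simp add: velocity_def scaleR_diff_right)
  also have "spec_norm (?U1 ** ?W ** ?L1 - ?U2 ** ?W ** ?L2) \<le>
     spec_norm (?U1 - ?U2) * spec_norm ?W * spec_norm ?L1 + spec_norm ?U2 * spec_norm (?W - ?W) * spec_norm ?L1
     + spec_norm ?U2 * spec_norm ?W * spec_norm (?L1 - ?L2)" by (rule spec_norm_sandwich_diff)
  also have "\<dots> \<le> (exp (1/2) * (1/2) / real N) * ?w * exp (1/2) + 0
     + exp (1/2) * ?w * ((1/2) * exp (1/2) / real N)"
  proof (intro add_mono mult_mono)
    show "spec_norm (?U1 - ?U2) \<le> exp (1/2) * (1/2) / real N"
      using spec_norm_upper_prod_step[OF n] by (simp flip: transpose_diff)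
    show "spec_norm (?L1 - ?L2) \<le> (1/2) * exp (1/2) / real N"
      using spec_norm_lower_prod_step[OF n] by (simp flip: transpose_diff)
    show "spec_norm ?U2 \<le> exp (1/2)" using n spec_norm_upper_prod[OF N _ bnd] by simp
    show "spec_norm ?L1 \<le> exp (1/2)" using n spec_norm_lower_prod[OF N _ bnd] by simp
  qed (use W in \<open>auto simp: spec_norm_nonneg residual_bound_nonneg\<close>)
  also have "\<dots> = exp 1 * ?w / real N"
    by (simp add: field_simps exp_add[symmetric])
  finally show ?thesis by simp
qed

end

section \<open>Comparing a network of depth \<open>N\<close> with one of depth \<open>2 N\<close>\<close>

text \<open>
  Two consecutive layers of the deep network, multiplied together, agree with one layer of
  the shallow network up to \<open>O(1/N\<^sup>2)\<close> plus the parameter mismatch divided by \<open>N\<close>.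
\<close>

locale refinement =
  fixes N :: nat and th1 th2 :: "nat \<Rightarrow> real^'n^'n" and sg :: real
  assumes N: "1 \<le> N"
    and bnd1: "\<And>k. 1 \<le> k \<Longrightarrow> k \<le> N \<Longrightarrow> spec_norm (th1 k) \<le> 1/2"
    and bnd2: "\<And>k. 1 \<le> k \<Longrightarrow> k \<le> 2*N \<Longrightarrow> spec_norm (th2 k) \<le> 1/2"
    and slow: "\<And>j. 1 \<le> j \<Longrightarrow> j + 1 \<le> 2*N \<Longrightarrow> spec_norm (th2 (j+1) - th2 j) \<le> sg / real (2*N)"
    and sg0: "0 \<le> sg"
begin

definition mean_gap :: real where
  "mean_gap = (\<Sum>k\<in>{1..N}. spec_norm (th1 k - th2 (2*k))) / real N"

definition paired_layer :: "nat \<Rightarrow> real^'n^'n" where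
  "paired_layer j = layer (2*N) th2 (2*j) ** layer (2*N) th2 (2*j - 1)"

definition gap_bound :: real where
  "gap_bound = exp 1 * (mean_gap + (sg + 2) / real N)"

lemma N2: "1 \<le> 2*N" using N by simp

lemma spec_norm_coarse_layer:
  assumes "1 \<le> k" "k \<le> N"
  shows "spec_norm (layer N th1 k) \<le> 1 + 1 / real N"
proof -
  have "spec_norm (layer N th1 k) \<le> 1 + (1/2) / real N"
    by (rule spec_norm_layer_bounded[OF N _ bnd1]) (use assms in auto)
  also have "\<dots> \<le> 1 + 1 / real N" using N by (simp add: field_simps)
  finally show ?thesis .
qed

lemma spec_norm_fine_layer:
  assumes "1 \<le> j" "j \<le> 2*N"
  shows "spec_norm (layer (2*N) th2 j) \<le> 1 + 1 / (4 * real N)"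
proof -
  have "spec_norm (layer (2*N) th2 j) \<le> 1 + (1/2) / real (2*N)"
    by (rule spec_norm_layer_bounded[OF N2 _ bnd2]) (use assms in auto)
  then show ?thesis by simp
qed

lemma spec_norm_paired_layer: "1 \<le> k \<Longrightarrow> k \<le> N \<Longrightarrow> spec_norm (paired_layer k) \<le> 1 + 1 / real N"
proof -
  assume k: "1 \<le> k" "k \<le> N"
  have "spec_norm (paired_layer k) \<le> (1 + 1 / (4 * real N)) * (1 + 1 / (4 * real N))"
    unfolding paired_layer_def using k
    by (intro order_trans[OF spec_norm_mult] mult_mono spec_norm_fine_layer) (auto simp: spec_norm_nonneg)
  also have "\<dots> \<le> 1 + 1 / real N"
    using N by (simp add: field_simps)
  finally show ?thesis .
qed

lemma spec_norm_layer_paired_diff: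
  assumes k: "1 \<le> k" "k \<le> N"
  shows "spec_norm (layer N th1 k - paired_layer k) \<le> spec_norm (th1 k - th2 (2*k)) / real N + (sg + 1) / (real N)^2"
proof -
  let ?a = "th2 (2*k)" and ?b = "th2 (2*k - 1)"
  have "paired_layer k = mat 1 + (1 / (2 * real N)) *\<^sub>R ?b + (1 / (2 * real N)) *\<^sub>R ?a
      + (1 / (4 * (real N)^2)) *\<^sub>R (?a ** ?b)"
    by (simp add: paired_layer_def layer_def matrix_add_ldistrib matrix_add_rdistrib matrix_mul_scaleR_left
      matrix_mul_scaleR_right power2_eq_square add.assoc scaleR_add_right)
  then have eq: "layer N th1 k - paired_layer k = (1 / real N) *\<^sub>R (th1 k - ?a)
      + (1 / (2 * real N)) *\<^sub>R (?a - ?b) - (1 / (4 * (real N)^2)) *\<^sub>R (?a ** ?b)"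
    by (simp add: layer_def vec_eq_iff field_simps)
  have sab: "spec_norm (?a - ?b) \<le> sg / real (2*N)"
    using slow[of "2*k - 1"] k by simp
  have sa: "spec_norm ?a \<le> 1/2" and sb: "spec_norm ?b \<le> 1/2" using k by (intro bnd2; simp)+
  have "spec_norm (layer N th1 k - paired_layer k) \<le> (1 / real N) * spec_norm (th1 k - ?a)
      + (1 / (2 * real N)) * spec_norm (?a - ?b) + (1 / (4 * (real N)^2)) * spec_norm (?a ** ?b)"
    unfolding eq
    by (rule order_trans[OF spec_norm_triangle_diff add_mono[OF order_trans[OF spec_norm_triangle add_mono]]])
       (simp_all add: spec_norm_scaleR)
  also have "\<dots> \<le> (1 / real N) * spec_norm (th1 k - ?a) + (1 / (2 * real N)) * (sg / real (2*N))
      + (1 / (4 * (real N)^2)) * (1/2 * (1/2))"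
    using sab sa sb by (intro add_mono mult_left_mono order_trans[OF spec_norm_mult] mult_mono)
      (auto simp: spec_norm_nonneg)
  also have "\<dots> \<le> spec_norm (th1 k - th2 (2*k)) / real N + (sg + 1) / (real N)^2"
    using N sg0 by (simp add: field_simps power2_eq_square)
  finally show ?thesis .
qed

lemma spec_norm_segment_prod_paired_diff:
  assumes "a + l \<le> N"
  shows "spec_norm (segment_prod (layer N th1) a l - segment_prod paired_layer a l)
    \<le> exp 1 * (mean_gap + (sg + 1) / real N)"
proof -
  let ?d = "\<lambda>k. spec_norm (layer N th1 k - paired_layer k)"
  have "(\<Sum>k\<in>{a<..a+l}. ?d k) \<le> (\<Sum>k\<in>{1..N}. ?d k)"
    using assms by (intro sum_mono2) (auto simp: spec_norm_nonneg)
  also have "\<dots> \<le> (\<Sum>k\<in>{1..N}. spec_norm (th1 k - th2 (2*k)) / real N + (sg + 1) / (real N)^2)"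
    by (intro sum_mono spec_norm_layer_paired_diff) auto
  also have "\<dots> = mean_gap + (sg + 1) / real N"
    using N by (simp add: mean_gap_def sum.distrib sum_divide_distrib power2_eq_square)
  finally have sum: "(\<Sum>k\<in>{a<..a+l}. ?d k) \<le> mean_gap + (sg + 1) / real N" .
  have pow: "(1 + 1 / real N) ^ l \<le> exp 1"
    using assms one_plus_div_power_le_exp[of 1 l N] by simp
  have "spec_norm (segment_prod (layer N th1) a l - segment_prod paired_layer a l)
      \<le> (1 + 1 / real N) ^ l * (\<Sum>k\<in>{a<..a+l}. ?d k)"
    using assms by (intro spec_norm_segment_prod_diff) (auto intro: spec_norm_coarse_layer spec_norm_paired_layer)
  also have "\<dots> \<le> exp 1 * (mean_gap + (sg + 1) / real N)"
    using sum pow by (intro mult_mono) (auto intro!: sum_nonneg simp: spec_norm_nonneg)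
  finally show ?thesis .
qed

lemma mean_gap_nonneg: "0 \<le> mean_gap"
  unfolding mean_gap_def by (intro divide_nonneg_nonneg sum_nonneg) (auto simp: spec_norm_nonneg)

lemma relax_gap_bound: "exp 1 * (mean_gap + (sg + 1) / real N) \<le> gap_bound"
  unfolding gap_bound_def using N by (intro mult_left_mono add_left_mono divide_right_mono) auto

lemma spec_norm_piprod_diff: "spec_norm (piprod N th1 N - piprod (2*N) th2 (2*N)) \<le> gap_bound"
proof -
  have "piprod (2*N) th2 (2*N) = segment_prod paired_layer 0 N"
    unfolding piprod_eq_segment_prod paired_layer_def
    using segment_prod_pairs[of "layer (2*N) th2" 0 N] by simp
  then show ?thesis
    using spec_norm_segment_prod_paired_diff[of 0 N] relax_gap_bound
    by (simp add: piprod_eq_segment_prod)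
qed

lemma spec_norm_upper_prod_diff:
  assumes n: "1 \<le> n" "n \<le> N"
  shows "spec_norm (upper_prod N th1 n - upper_prod (2*N) th2 (2*n)) \<le> gap_bound"
proof -
  have "upper_prod (2*N) th2 (2*n) = segment_prod (layer (2*N) th2) (2*n) (2*(N - n))"
    unfolding upper_prod_def by (simp add: diff_mult_distrib2)
  also have "\<dots> = segment_prod paired_layer n (N - n)"
    unfolding paired_layer_def by (rule segment_prod_pairs)
  finally show ?thesis
    using spec_norm_segment_prod_paired_diff[of n "N - n"] relax_gap_bound n
    by (simp add: upper_prod_def)
qed

lemma spec_norm_lower_prod_diff:
  assumes n: "1 \<le> n" "n \<le> N"
  shows "spec_norm (lower_prod N th1 n - lower_prod (2*N) th2 (2*n)) \<le> gap_bound"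
proof -
  let ?RY = "segment_prod paired_layer 0 (n - 1)" and ?RA = "segment_prod (layer N th1) 0 (n - 1)"
  have "lower_prod (2*N) th2 (2*n) = layer (2*N) th2 (2*n - 1) ** segment_prod (layer (2*N) th2) 0 (2*(n-1))"
    unfolding lower_prod_def using n by (simp add: Suc_diff_Suc[symmetric] numeral_2_eq_2)
  also have "segment_prod (layer (2*N) th2) 0 (2*(n-1)) = ?RY"
    unfolding paired_layer_def using segment_prod_pairs[of "layer (2*N) th2" 0 "n - 1"] by simp
  finally have eq: "lower_prod N th1 n - lower_prod (2*N) th2 (2*n)
      = (?RA - ?RY) + (-(1 / real (2*N))) *\<^sub>R (th2 (2*n - 1) ** ?RY)"
    by (simp add: lower_prod_def layer_def matrix_add_rdistrib matrix_mul_scaleR_left)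
  have "spec_norm ?RY \<le> (1 + 1 / real N) ^ (n - 1)"
    using n by (intro spec_norm_segment_prod_le) (auto intro: spec_norm_paired_layer)
  also have "\<dots> \<le> exp 1" using n one_plus_div_power_le_exp[of 1 "n - 1" N] by simp
  finally have sRY: "spec_norm ?RY \<le> exp 1" .
  have "spec_norm (lower_prod N th1 n - lower_prod (2*N) th2 (2*n))
      \<le> spec_norm (?RA - ?RY) + (1 / real (2*N)) * spec_norm (th2 (2*n - 1) ** ?RY)"
    unfolding eq by (rule order_trans[OF spec_norm_triangle]) (simp add: spec_norm_scaleR)
  also have "\<dots> \<le> exp 1 * (mean_gap + (sg + 1) / real N) + (1 / real (2*N)) * ((1/2) * exp 1)"
  proof (intro add_mono mult_left_mono)
    show "spec_norm (?RA - ?RY) \<le> exp 1 * (mean_gap + (sg + 1) / real N)"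
      using n by (intro spec_norm_segment_prod_paired_diff) simp
    show "spec_norm (th2 (2*n - 1) ** ?RY) \<le> (1/2) * exp 1"
      using n by (intro order_trans[OF spec_norm_mult] mult_mono bnd2 sRY) (auto simp: spec_norm_nonneg)
  qed simp
  also have "\<dots> \<le> gap_bound" unfolding gap_bound_def using N by (simp add: field_simps)
  finally show ?thesis .
qed

lemma spec_norm_velocity_diff:
  assumes n: "1 \<le> n" "n \<le> N"
  shows "spec_norm (velocity S B N th1 n - velocity S B (2*N) th2 (2*n))
    \<le> 2 * (2 * exp (1/2) * residual_bound S B + exp 1 * spec_norm S) * gap_bound"
proof -
  let ?U1 = "transpose (upper_prod N th1 n)" and ?U2 = "transpose (upper_prod (2*N) th2 (2*n))"
  let ?L1 = "transpose (lower_prod N th1 n)" and ?L2 = "transpose (lower_prod (2*N) th2 (2*n))"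
  let ?W1 = "weighted_residual S B N th1" and ?W2 = "weighted_residual S B (2*N) th2"
  let ?w = "residual_bound S B"
  have gap_bound_nonneg: "0 \<le> gap_bound" unfolding gap_bound_def using mean_gap_nonneg sg0 by simp
  have W1: "spec_norm ?W1 \<le> ?w"
    unfolding residual_bound_def by (rule spec_norm_weighted_residual[where u="1/2", OF N _ bnd1]) simp
  have W2: "spec_norm ?W2 \<le> ?w"
    unfolding residual_bound_def by (rule spec_norm_weighted_residual[where u="1/2", OF N2 _ bnd2]) simp
  have U2: "spec_norm ?U2 \<le> exp (1/2)"
    unfolding spec_norm_transpose by (rule spec_norm_upper_prod[OF N2 _ bnd2]) (use n in auto)
  have L1: "spec_norm ?L1 \<le> exp (1/2)"
    unfolding spec_norm_transpose by (rule spec_norm_lower_prod[OF N _ bnd1]) (use n in auto)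
  have "spec_norm (velocity S B N th1 n - velocity S B (2*N) th2 (2*n))
      = 2 * spec_norm (?U1 ** ?W1 ** ?L1 - ?U2 ** ?W2 ** ?L2)"
    using spec_norm_scaleR[of "-2" "?U1 ** ?W1 ** ?L1 - ?U2 ** ?W2 ** ?L2"]
    by (simp add: velocity_def scaleR_diff_right)
  also have "spec_norm (?U1 ** ?W1 ** ?L1 - ?U2 ** ?W2 ** ?L2) \<le>
     spec_norm (?U1 - ?U2) * spec_norm ?W1 * spec_norm ?L1 + spec_norm ?U2 * spec_norm (?W1 - ?W2) * spec_norm ?L1
     + spec_norm ?U2 * spec_norm ?W2 * spec_norm (?L1 - ?L2)" by (rule spec_norm_sandwich_diff)
  also have "\<dots> \<le> gap_bound * ?w * exp (1/2) + exp (1/2) * (gap_bound * spec_norm S) * exp (1/2)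
      + exp (1/2) * ?w * gap_bound"
  proof (intro add_mono mult_mono)
    show "spec_norm (?U1 - ?U2) \<le> gap_bound"
      using spec_norm_upper_prod_diff[OF n] by (simp flip: transpose_diff)
    show "spec_norm (?L1 - ?L2) \<le> gap_bound"
      using spec_norm_lower_prod_diff[OF n] by (simp flip: transpose_diff)
    show "spec_norm (?W1 - ?W2) \<le> gap_bound * spec_norm S"
      unfolding weighted_residual_def using spec_norm_piprod_diff
      by (simp add: matrix_diff_rdistrib[symmetric] order_trans[OF spec_norm_mult] mult_right_mono
          spec_norm_nonneg)
  qed (use W1 W2 U2 L1 in \<open>auto simp: spec_norm_nonneg gap_bound_nonneg residual_bound_nonneg\<close>)
  also have "\<dots> = (2 * exp (1/2) * ?w + exp 1 * spec_norm S) * gap_bound"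
    by (simp add: algebra_simps exp_add[symmetric])
  finally show ?thesis by (simp add: algebra_simps)
qed

end

section \<open>Propagation of the scaling gap along the flow\<close>

locale flow_family =
  fixes S B :: "real^'n^'n" and th :: "nat \<Rightarrow> nat \<Rightarrow> real \<Rightarrow> real^'n^'n" and C0 :: real
  assumes flow: "\<And>N n t. 1 \<le> N \<Longrightarrow> 1 \<le> n \<Longrightarrow> n \<le> N \<Longrightarrow> 0 \<le> t \<Longrightarrow>
        ((\<lambda>s. th N n s) has_vector_derivative velocity S B N (\<lambda>k. th N k t) n) (at t within {0..})"
    and bounded: "\<And>N n s. 1 \<le> N \<Longrightarrow> 1 \<le> n \<Longrightarrow> n \<le> N \<Longrightarrow> 0 \<le> s \<Longrightarrow> spec_norm (th N n s) \<le> 1/2"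
    and C0: "0 \<le> C0"
    and init_slow: "\<And>N n. 1 \<le> N \<Longrightarrow> 1 \<le> n \<Longrightarrow> n + 1 \<le> N \<Longrightarrow>
        spec_norm (th N (n+1) 0 - th N n 0) \<le> C0 / real N"
begin

lemma slow_variation:
  assumes N: "1 \<le> N" and n: "1 \<le> n" "n + 1 \<le> N" and s: "0 \<le> s"
  shows "spec_norm (th N (n+1) s - th N n s) \<le> (C0 + 2 * exp 1 * residual_bound S B * s) / real N"
proof -
  let ?d = "\<lambda>s. th N (n+1) s - th N n s"
  have "spec_norm (?d s - ?d 0) \<le> (2 * exp 1 * residual_bound S B / real N) * s"
  proof (rule spec_norm_increment_le_const[OF s])
    fix r assume r: "r \<in> {0..s}"
    show "(?d has_vector_derivative
        velocity S B N (\<lambda>k. th N k r) (n+1) - velocity S B N (\<lambda>k. th N k r) n) (at r within {0..})"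
      using r n N by (intro has_vector_derivative_diff flow) auto
    show "spec_norm (velocity S B N (\<lambda>k. th N k r) (n+1) - velocity S B N (\<lambda>k. th N k r) n)
        \<le> 2 * exp 1 * residual_bound S B / real N"
      by (rule spec_norm_velocity_step[OF N _ n]) (use r bounded N in auto)
  qed
  moreover have "spec_norm (?d s) \<le> spec_norm (?d 0) + spec_norm (?d s - ?d 0)"
    using spec_norm_triangle[of "?d 0" "?d s - ?d 0"] by simp
  ultimately show ?thesis using init_slow[OF N n] by (simp add: add_divide_distrib)
qed

definition scaling_gap :: "nat \<Rightarrow> nat \<Rightarrow> real \<Rightarrow> real^'n^'n" where
  "scaling_gap N k s = th N k s - th (2*N) (2*k) s"

definition scaling_gap_velocity :: "nat \<Rightarrow> nat \<Rightarrow> real \<Rightarrow> real^'n^'n" where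
  "scaling_gap_velocity N k s =
    velocity S B N (\<lambda>j. th N j s) k - velocity S B (2*N) (\<lambda>j. th (2*N) j s) (2*k)"

definition gap_rate :: real where
  "gap_rate = 2 * (2 * exp (1/2) * residual_bound S B + exp 1 * spec_norm S) * exp 1"

definition gap_offset :: "real \<Rightarrow> real" where
  "gap_offset t = C0 + 2 * exp 1 * residual_bound S B * t + 2"

definition frobenius_gap_rate :: real where
  "frobenius_gap_rate = sqrt (real CARD('n)) * gap_rate"

definition gap_energy :: "nat \<Rightarrow> real \<Rightarrow> real" where
  "gap_energy N s = (\<Sum>k\<in>{1..N}. (norm (scaling_gap N k s))^2)"

lemma gap_rate_nonneg: "0 \<le> gap_rate" and frobenius_gap_rate_nonneg: "0 \<le> frobenius_gap_rate"
  by (simp_all add: gap_rate_def frobenius_gap_rate_def residual_bound_nonneg spec_norm_nonneg)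

lemma scaling_gap_has_derivative:
  "1 \<le> N \<Longrightarrow> 1 \<le> k \<Longrightarrow> k \<le> N \<Longrightarrow> 0 \<le> s \<Longrightarrow>
    (scaling_gap N k has_vector_derivative scaling_gap_velocity N k s) (at s within {0..})"
  unfolding scaling_gap_def[abs_def] scaling_gap_velocity_def by (intro has_vector_derivative_diff flow) auto

lemma spec_norm_scaling_gap_velocity:
  assumes N: "1 \<le> N" and k: "1 \<le> k" "k \<le> N" and s: "0 \<le> s" "s \<le> t"
  shows "spec_norm (scaling_gap_velocity N k s)
    \<le> gap_rate * ((\<Sum>j\<in>{1..N}. spec_norm (scaling_gap N j s)) + gap_offset t) / real N"
proof -
  let ?sg = "C0 + 2 * exp 1 * residual_bound S B * t"
  interpret refinement N "\<lambda>j. th N j s" "\<lambda>j. th (2*N) j s" ?sg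
  proof
    show "spec_norm (th (2*N) (j+1) s - th (2*N) j s) \<le> ?sg / real (2*N)"
      if "1 \<le> j" "j + 1 \<le> 2*N" for j
    proof -
      have "spec_norm (th (2*N) (j+1) s - th (2*N) j s) \<le> (C0 + 2 * exp 1 * residual_bound S B * s) / real (2*N)"
        using slow_variation[of "2*N" j s] that s by simp
      also have "\<dots> \<le> ?sg / real (2*N)"
        using s residual_bound_nonneg[of S B]
        by (intro divide_right_mono add_left_mono mult_left_mono) auto
      finally show ?thesis .
    qed
    show "0 \<le> ?sg" using C0 residual_bound_nonneg[of S B] s by simp
  qed (use N s bounded in auto)
  have "spec_norm (scaling_gap_velocity N k s)
      \<le> 2 * (2 * exp (1/2) * residual_bound S B + exp 1 * spec_norm S) * gap_bound"
    unfolding scaling_gap_velocity_def using k by (rule spec_norm_velocity_diff)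
  also have "\<dots> = gap_rate * ((\<Sum>j\<in>{1..N}. spec_norm (scaling_gap N j s)) + gap_offset t) / real N"
    unfolding gap_bound_def mean_gap_def gap_rate_def gap_offset_def scaling_gap_def
    using N by (simp add: field_simps)
  finally show ?thesis .
qed

lemma scaling_gap_energy_growth:
  assumes N: "1 \<le> N" and s: "0 \<le> s" "s \<le> t"
  shows "2 * (\<Sum>k\<in>{1..N}. scaling_gap N k s \<bullet> scaling_gap_velocity N k s)
    \<le> (3 * frobenius_gap_rate + 1) * gap_energy N s + frobenius_gap_rate * (gap_offset t)^2 / real N"
proof -
  let ?K = frobenius_gap_rate and ?rho = "gap_offset t" and ?D = "\<lambda>k. scaling_gap N k s"
  let ?a = "\<Sum>k\<in>{1..N}. norm (?D k)" and ?V = "\<Sum>k\<in>{1..N}. (norm (?D k))^2"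
  have Np: "0 < real N" using N by simp
  have "?a^2 \<le> ?V * real N"
    using Cauchy_Schwarz_ineq_sum[of "\<lambda>k. norm (?D k)" "\<lambda>_. 1" "{1..N}"] by simp
  then have aV: "?a^2 \<le> real N * ?V" by (simp add: mult.commute)
  have vel: "norm (scaling_gap_velocity N k s) \<le> ?K * (?a + ?rho) / real N" if "k \<in> {1..N}" for k
  proof -
    have "norm (scaling_gap_velocity N k s) \<le> sqrt (real CARD('n)) * spec_norm (scaling_gap_velocity N k s)"
      by (rule norm_le_sqrt_card_spec_norm)
    also have "\<dots> \<le> sqrt (real CARD('n)) * (gap_rate * ((\<Sum>j\<in>{1..N}. spec_norm (?D j)) + ?rho) / real N)"
      using that s N by (intro mult_left_mono spec_norm_scaling_gap_velocity) auto
    also have "\<dots> \<le> sqrt (real CARD('n)) * (gap_rate * (?a + ?rho) / real N)"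
      using Np gap_rate_nonneg
      by (intro mult_left_mono divide_right_mono add_right_mono sum_mono spec_norm_le_norm) auto
    finally show ?thesis by (simp add: frobenius_gap_rate_def mult.assoc)
  qed
  have "2 * (\<Sum>k\<in>{1..N}. ?D k \<bullet> scaling_gap_velocity N k s)
      \<le> 2 * (\<Sum>k\<in>{1..N}. norm (?D k) * (?K * (?a + ?rho) / real N))"
    using norm_cauchy_schwarz vel
    by (intro mult_left_mono sum_mono order_trans[OF norm_cauchy_schwarz] mult_left_mono) auto
  also have "\<dots> = 2 * (?a * (?K * (?a + ?rho) / real N))"
    by (simp only: sum_distrib_right)
  also have "\<dots> = ?K * (2 * (?a * ?a + ?a * ?rho)) / real N"
    using Np by (simp add: field_simps)
  also have "\<dots> \<le> ?K * (3 * ?a^2 + ?rho^2) / real N"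
  proof -
    have "2 * (?a * ?a + ?a * ?rho) \<le> 3 * ?a^2 + ?rho^2"
      using sum_squares_bound[of ?a ?rho] by (simp add: power2_eq_square)
    then show ?thesis
      using Np frobenius_gap_rate_nonneg by (intro divide_right_mono mult_left_mono) auto
  qed
  also have "\<dots> \<le> ?K * (3 * (real N * ?V) + ?rho^2) / real N"
    using frobenius_gap_rate_nonneg aV Np by (intro divide_right_mono mult_left_mono) auto
  also have "\<dots> = 3 * ?K * ?V + ?K * ?rho^2 / real N"
    using Np by (simp add: field_simps)
  also have "\<dots> \<le> (3 * ?K + 1) * ?V + ?K * ?rho^2 / real N"
    by (simp add: algebra_simps sum_nonneg)
  finally show ?thesis unfolding gap_energy_def .
qed

lemma gap_energy_has_derivative:
  assumes "1 \<le> N" "0 \<le> r"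
  shows "(gap_energy N has_real_derivative 2 * (\<Sum>k\<in>{1..N}. scaling_gap N k r \<bullet> scaling_gap_velocity N k r))
    (at r within {0..})"
proof -
  have "gap_energy N = (\<lambda>r. \<Sum>k\<in>{1..N}. scaling_gap N k r \<bullet> scaling_gap N k r)"
    by (simp add: gap_energy_def[abs_def] power2_norm_eq_inner)
  then show ?thesis
    unfolding has_real_derivative_iff_has_vector_derivative using assms
    by (auto intro!: has_vector_derivative_sum scaling_gap_has_derivative
        bounded_bilinear.has_vector_derivative[OF bounded_bilinear_inner, THEN has_vector_derivative_eq_rhs]
        simp: inner_commute sum_distrib_left)
qed

lemma gap_energy_initial:
  assumes N: "1 \<le> N" and init: "\<And>k. 1 \<le> k \<Longrightarrow> k \<le> N \<Longrightarrow> spec_norm (scaling_gap N k 0) \<le> C / real N"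
  shows "gap_energy N 0 \<le> real CARD('n) * C^2 / real N"
proof -
  let ?d = "real CARD('n)"
  have "(norm (scaling_gap N k 0))^2 \<le> (sqrt ?d * (C / real N))^2" if "k \<in> {1..N}" for k
  proof -
    have "norm (scaling_gap N k 0) \<le> sqrt ?d * spec_norm (scaling_gap N k 0)"
      by (rule norm_le_sqrt_card_spec_norm)
    also have "\<dots> \<le> sqrt ?d * (C / real N)"
      using init that by (intro mult_left_mono) auto
    finally show ?thesis by (intro power_mono) auto
  qed
  then have "gap_energy N 0 \<le> (\<Sum>k\<in>{1..N}. (sqrt ?d * (C / real N))^2)"
    unfolding gap_energy_def by (rule sum_mono)
  also have "\<dots> = ?d * C^2 / real N"
    using N by (simp add: power_mult_distrib power2_eq_square field_simps)
  finally show ?thesis .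
qed

text \<open>
  Gronwall gives \<open>gap_energy N s = O(1/N)\<close>, hence
  \<open>\<Sum>\<^sub>k |scaling_gap N k s| = O(1)\<close> by Cauchy-Schwarz.
\<close>

lemma scaling_gap_sum_bounded:
  assumes t: "0 \<le> t"
    and init: "\<And>N k. N0 \<le> N \<Longrightarrow> 1 \<le> k \<Longrightarrow> k \<le> N \<Longrightarrow> spec_norm (scaling_gap N k 0) \<le> C / real N"
  shows "\<exists>K. \<forall>N \<ge> max N0 1. \<forall>s\<in>{0..t}. (\<Sum>k\<in>{1..N}. norm (scaling_gap N k s)) \<le> K"
proof -
  let ?K = frobenius_gap_rate and ?rho = "gap_offset t" and ?d = "real CARD('n)"
  define growth where "growth = 3 * ?K + 1"
  have growth_pos: "0 < growth" unfolding growth_def using frobenius_gap_rate_nonneg by simp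
  define energy_bound where "energy_bound = exp (growth * t) * (?d * C^2 + ?K * ?rho^2 / growth)"
  show ?thesis
  proof (intro exI[of _ "sqrt energy_bound"] allI impI ballI)
    fix N s assume "max N0 1 \<le> N" and s: "s \<in> {0..t}"
    then have N: "1 \<le> N" and N0: "N0 \<le> N" by auto
    define source where "source = ?K * ?rho^2 / real N"
    have source_nonneg: "0 \<le> source" unfolding source_def using frobenius_gap_rate_nonneg by simp
    have "gap_energy N s \<le> exp (growth * s) * (gap_energy N 0 + source / growth)"
    proof (rule gronwall_linear[OF _ growth_pos source_nonneg])
      show "(gap_energy N has_real_derivative
          2 * (\<Sum>k\<in>{1..N}. scaling_gap N k r \<bullet> scaling_gap_velocity N k r)) (at r within {0..})"
        "2 * (\<Sum>k\<in>{1..N}. scaling_gap N k r \<bullet> scaling_gap_velocity N k r) \<le> growth * gap_energy N r + source"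
        if "r \<in> {0..s}" for r
        unfolding growth_def source_def using gap_energy_has_derivative scaling_gap_energy_growth N that s by auto
    qed (use s in auto)
    also have "\<dots> \<le> exp (growth * t) * (?d * C^2 / real N + source / growth)"
    proof (intro mult_mono add_right_mono)
      have "0 \<le> gap_energy N 0" unfolding gap_energy_def by (simp add: sum_nonneg)
      then show "0 \<le> gap_energy N 0 + source / growth" using growth_pos source_nonneg by simp
    qed (use gap_energy_initial[OF N init[OF N0]] s growth_pos in auto)
    also have "\<dots> = energy_bound / real N"
      unfolding energy_bound_def source_def using N growth_pos by (simp add: field_simps)
    finally have "real N * gap_energy N s \<le> energy_bound"
      using N by (simp add: pos_le_divide_eq mult.commute)
    moreover have "(\<Sum>k\<in>{1..N}. norm (scaling_gap N k s))^2 \<le> real N * gap_energy N s"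
      using Cauchy_Schwarz_ineq_sum[of "\<lambda>k. norm (scaling_gap N k s)" "\<lambda>_. 1" "{1..N}"]
      by (simp add: gap_energy_def mult.commute)
    ultimately show "(\<Sum>k\<in>{1..N}. norm (scaling_gap N k s)) \<le> sqrt energy_bound"
      by (intro real_le_rsqrt) auto
  qed
qed

theorem scaling_gap_bound:
  assumes t: "0 \<le> t"
    and init: "\<And>N k. N0 \<le> N \<Longrightarrow> 1 \<le> k \<Longrightarrow> k \<le> N \<Longrightarrow> spec_norm (scaling_gap N k 0) \<le> C / real N"
  shows "\<exists>C'. \<forall>N \<ge> max N0 1. \<forall>n\<in>{1..N}. spec_norm (scaling_gap N n t) \<le> C' / real N"
proof -
  obtain K where K: "\<And>N s. max N0 1 \<le> N \<Longrightarrow> s \<in> {0..t} \<Longrightarrow> (\<Sum>k\<in>{1..N}. norm (scaling_gap N k s)) \<le> K"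
    using scaling_gap_sum_bounded[OF t init] by blast
  show ?thesis
  proof (intro exI[of _ "C + t * (gap_rate * (K + gap_offset t))"] allI impI ballI)
    fix N n assume N: "max N0 1 \<le> N" and n: "n \<in> {1..N}"
    have Np: "0 < real N" using N by simp
    have "spec_norm (scaling_gap N n t - scaling_gap N n 0) \<le> (gap_rate * (K + gap_offset t) / real N) * t"
    proof (rule spec_norm_increment_le_const[OF t])
      fix s assume s: "s \<in> {0..t}"
      show "(scaling_gap N n has_vector_derivative scaling_gap_velocity N n s) (at s within {0..})"
        using N n s by (intro scaling_gap_has_derivative) auto
      have "spec_norm (scaling_gap_velocity N n s)
          \<le> gap_rate * ((\<Sum>j\<in>{1..N}. spec_norm (scaling_gap N j s)) + gap_offset t) / real N"
        using N n s by (intro spec_norm_scaling_gap_velocity) auto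
      also have "\<dots> \<le> gap_rate * (K + gap_offset t) / real N"
        using gap_rate_nonneg Np order_trans[OF sum_mono[OF spec_norm_le_norm] K[OF N s]]
        by (intro divide_right_mono mult_left_mono add_right_mono) auto
      finally show "spec_norm (scaling_gap_velocity N n s) \<le> gap_rate * (K + gap_offset t) / real N" .
    qed
    moreover have "spec_norm (scaling_gap N n 0) \<le> C / real N" using init N n by auto
    moreover have "spec_norm (scaling_gap N n t)
        \<le> spec_norm (scaling_gap N n 0) + spec_norm (scaling_gap N n t - scaling_gap N n 0)"
      using spec_norm_triangle[of "scaling_gap N n 0" "scaling_gap N n t - scaling_gap N n 0"] by simp
    ultimately show "spec_norm (scaling_gap N n t) \<le> (C + t * (gap_rate * (K + gap_offset t))) / real N"
      by (simp add: add_divide_distrib algebra_simps)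
  qed
qed

end

theorem lemma2:
  fixes S B :: "real^'d::finite^'d"
    and M m :: real
    and theta :: "nat \<Rightarrow> nat \<Rightarrow> real \<Rightarrow> real^'d^'d"
  assumes Sigma_sym: "transpose S = S"
    and Sigma_pd: "\<forall>x. x \<noteq> 0 \<longrightarrow> x \<bullet> (S *v x) > 0"
    and M_eig: "is_eigenvalue S M" and M_max: "\<forall>lam. is_eigenvalue S lam \<longrightarrow> lam \<le> M"
    and m_eig: "is_eigenvalue S m" and m_min: "\<forall>lam. is_eigenvalue S lam \<longrightarrow> m \<le> lam"
    and M_pos: "M > 0" and m_pos: "m > 0"
    and flow: "\<forall>N\<ge>1. \<forall>n\<in>{1..N}. \<forall>t\<ge>0. \<exists>G.
        ((\<lambda>X. loss S B N (\<lambda>k. if k = n then X else theta N k t)) has_derivative (\<lambda>H. G \<bullet> H))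
          (at (theta N n t))
        \<and> ((\<lambda>s. theta N n s) has_vector_derivative (- (real N *\<^sub>R G))) (at t within {0..})"
    and init_loss: "\<forall>N\<ge>1. sqrt (loss S B N (\<lambda>k. theta N k 0)) < m / (4 * sqrt (2 * M * exp 3))"
    and init_bound: "\<forall>N\<ge>1. \<forall>n\<in>{1..N}. spec_norm (theta N n 0) \<le> 1/4"
    and init_smooth: "\<exists>C0>0. \<forall>N\<ge>1. \<forall>n. 1 \<le> n \<and> n + 1 \<le> N \<longrightarrow>
        spec_norm (theta N (n+1) 0 - theta N n 0) \<le> C0 / real N"
    and init_scaling: "\<exists>C N0. \<forall>N\<ge>N0. \<forall>n\<in>{1..N}.
        spec_norm (theta N n 0 - theta (2*N) (2*n) 0) \<le> C / real N"
  shows "\<forall>t\<ge>0. \<exists>C N0. \<forall>N\<ge>N0. \<forall>n\<in>{1..N}.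
        spec_norm (theta N n t - theta (2*N) (2*n) t) \<le> C / real N"
proof (intro allI impI)
  fix t :: real assume t: "0 \<le> t"
  have psd: "0 \<le> y \<bullet> (S *v y)" for y
    using Sigma_pd by (cases "y = 0") (auto simp: less_imp_le)
  have velocity_flow: "((\<lambda>s. theta N n s) has_vector_derivative velocity S B N (\<lambda>k. theta N k r) n)
      (at r within {0..})" if "1 \<le> N" "1 \<le> n" "n \<le> N" "0 \<le> r" for N n r
    by (rule flow_has_velocity[where Th = "theta N", OF Sigma_sym]) (use that flow in auto)
  have bounded: "spec_norm (theta N n s) \<le> 1/2" if "1 \<le> N" "1 \<le> n" "n \<le> N" "0 \<le> s" for N n s
  proof -
    interpret gradient_flow S B m M N "theta N"
      using Sigma_sym m_min M_max m_pos M_pos psd that velocity_flow by unfold_locales auto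
    show ?thesis
      using init_bound init_loss that by (intro theta_bounded) (auto simp: loss_at_def)
  qed
  obtain C0 where "0 < C0" and "\<forall>N\<ge>1. \<forall>n. 1 \<le> n \<and> n + 1 \<le> N \<longrightarrow>
      spec_norm (theta N (n+1) 0 - theta N n 0) \<le> C0 / real N"
    using init_smooth by blast
  then interpret flow_family S B theta C0
    using velocity_flow bounded by unfold_locales auto
  obtain C N0 where "\<forall>N\<ge>N0. \<forall>n\<in>{1..N}. spec_norm (theta N n 0 - theta (2*N) (2*n) 0) \<le> C / real N"
    using init_scaling by blast
  then obtain C' where "\<forall>N \<ge> max N0 1. \<forall>n\<in>{1..N}. spec_norm (scaling_gap N n t) \<le> C' / real N"
    using scaling_gap_bound[OF t, of N0 C] by (auto simp: scaling_gap_def)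
  then show "\<exists>C N0. \<forall>N\<ge>N0. \<forall>n\<in>{1..N}. spec_norm (theta N n t - theta (2*N) (2*n) t) \<le> C / real N"
    unfolding scaling_gap_def by blast
qed

end
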